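(* Let $\mathcal{A}$ be a unital $*$-algebra (a unital $*$-subalgebra of $\mathcal{B}(\mathbf{h})$ for a Hilbert space $\mathbf{h}$), let $\mathcal{L}:\mathcal{A}\to\mathcal{A}$ be a conditionally completely positive map with $\mathcal{L}(1)=0$, and let $(M,\pi,\delta)$ be its canonical pre-Hilbert $\mathcal{A}$-$\mathcal{A}$ bimodule, left-action $*$-representation $\pi:\mathcal{A}\to\mathcal{B}^a(M)$ and bimodule derivation $\delta:\mathcal{A}\to M$, as described in the context. Let $E_{\mathcal{L}}=\mathcal{B}^a(\mathcal{A}\oplus M)$ with the $\mathcal{A}$-$\mathcal{A}$ bimodule structure $x.R=\tilde\pi(x)R$, $R.x=R\tilde\pi(x)$, where $\tilde\pi(x)=x\oplus\pi(x)$. If the second Hochschild cohomology $H^2(\mathcal{A},E_{\mathcal{L}})$ vanishes, then there exists a $*$-homomorphism $\beta:\mathcal{A}\to E_{\mathcal{L}}[[t]]$ which, writing $h=t^2$ (so $h^{\frac{2n-1}{2}}=t^{2n-1}$) and $$\beta(x)=\begin{pmatrix}\beta_{00}(h)(x) & \beta_{01}(h)(x)\\ \beta_{10}(h)(x) & \beta_{11}(h)(x)\end{pmatrix}$$ in the matrix decomposition of $E_{\mathcal{L}}$, has the form - $\beta_{00}(h)=\sum_{n\ge 0}h^n\theta_{00}^{(n)}$ with $\theta_{00}^{(0)}(x)=x$ and $\theta_{00}^{(1)}(x)=\mathcal{L}(x)$, - $\beta_{10}(h)=\sum_{n\ge 1}h^{\frac{2n-1}{2}}\theta_{10}^{(n)}$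 with $\theta_{10}^{(1)}(x)=\delta(x)$, - $\beta_{01}(h)=\sum_{n\ge 1}h^{\frac{2n-1}{2}}\theta_{01}^{(n)}$ with $\theta_{01}^{(1)}(x)=\delta^\dagger(x)$, - $\beta_{11}(h)=\sum_{n\ge 1}h^{n-1}\theta_{11}^{(n)}$ with $\theta_{11}^{(1)}(x)=\pi(x)$, for some linear maps $\theta_{\mu\nu}^{(n)}$ on $\mathcal{A}$.
   Context: A linear map $\mathcal{L}$ on $\mathcal{A}$ with $\mathcal{L}(1)=0$ that is conditionally completely positive admits a canonical (unique up to isomorphism) pre-Hilbert $\mathcal{A}$-$\mathcal{A}$ bimodule $M$ with $\mathcal{A}$-valued inner product $\langle\cdot,\cdot\rangle$, whose left action is given by a $*$-representation $\pi$ of $\mathcal{A}$ into the algebra $\mathcal{B}^a(M)$ of adjointable maps on $M$, together with a bimodule derivation $\delta:\mathcal{A}\to M$ (i.e. $\delta(xy)=\pi(x)\delta(y)+\delta(x)y$) such that $M$ is the right $\mathcal{A}$-linear span of $\delta(\mathcal{A})$ and $\mathcal{L}(xy)-x\mathcal{L}(y)-\mathcal{L}(x)y=\delta^\dagger(x)\delta(y)$ for all $x,y\in\mathcal{A}$. Here for a linear map $\psi$, $\psi^\dagger(x):=(\psi(x^* ))^*$, and an element $\xi\in M$ is identified with the adjoint map $\xi^*=\langle\xi|:M\to\mathcal{A}$, $\eta\mapsto\langle\xi,\eta\rangle$; $M^*=\{\xi^*:\xi\in M\}$. The $*$-algebra $E_{\mathcal{L}}=\mathcal{B}^a(\mathcal{A}\oplus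 M)$ (product = composition, $*$ = adjoint) is the direct sum of the complemented submodules $\mathcal{A}$, $M^*$, $M$, $\mathcal{B}^a(M)$, and each $X\in E_{\mathcal{L}}$ is written as a $2\times 2$ matrix whose $(0,0)$ entry lies in $\mathcal{A}$, $(0,1)$ entry in $M^*$, $(1,0)$ entry in $M$, and $(1,1)$ entry in $\mathcal{B}^a(M)$. $H^n(\mathcal{A},N)$ is the Hochschild cohomology of $\mathcal{A}$ with coefficients in the bimodule $N$: the cohomology of the complex $C^0=N$, $C^n$ = multilinear maps $\mathcal{A}^n\to N$, with the standard Hochschild coboundary $bf(a_1,\dots,a_{n+1})=a_1f(a_2,\dots,a_{n+1})+\sum_{i=1}^{n}(-1)^i f(a_1,\dots,a_ia_{i+1},\dots,a_{n+1})+(-1)^{n+1}f(a_1,\dots,a_n)a_{n+1}$. For a $*$-algebra $\mathcal{C}$, $\mathcal{C}[[t]]$ denotes the $*$-algebra of formal power series in one indeterminate $t$ with coefficients in $\mathcal{C}$; a $*$-homomorphism $\beta:\mathcal{A}\to E_{\mathcal{L}}[[t]]$ means $\beta(xy)=\beta(x)\beta(y)$ and $\beta(x^* )=\beta(x)^*$. *)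

theory Defs
  imports Complex_Main
begin

class cvec = ab_group_add +
  fixes scC :: "complex \<Rightarrow> 'a \<Rightarrow> 'a"
  assumes scC_add_right: "scC c (x + y) = scC c x + scC c y"
    and scC_add_left: "scC (c + d) x = scC c x + scC d x"
    and scC_scC: "scC c (scC d x) = scC (c * d) x"
    and scC_one: "scC 1 x = x"

class star_alg = ring_1 + cvec +
  fixes star :: "'a \<Rightarrow> 'a"
  assumes star_star: "star (star x) = x"
    and star_add: "star (x + y) = star x + star y"
    and star_mult: "star (x * y) = star y * star x"
    and star_scC: "star (scC c x) = scC (cnj c) (star x)"
    and scC_mult_left: "scC c x * y = scC c (x * y)"
    and scC_mult_right: "x * scC c y = scC c (x * y)"

class cinner_space = cvec +
  fixes cinner :: "'a \<Rightarrow> 'a \<Rightarrow> complex"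
  assumes cinner_sym: "cinner y x = cnj (cinner x y)"
    and cinner_add_right: "cinner x (y + z) = cinner x y + cinner x z"
    and cinner_scC_right: "cinner x (scC c y) = c * cinner x y"
    and cinner_nonneg: "Re (cinner x x) \<ge> 0"
    and cinner_definite: "cinner x x = 0 \<Longrightarrow> x = 0"

definition cnorm :: "'a::cinner_space \<Rightarrow> real" where
  "cnorm x = sqrt (Re (cinner x x))"

class chilbert = cinner_space +
  assumes cauchy_converges: "\<And>X :: nat \<Rightarrow> 'a.
    (\<forall>e::real>0. \<exists>N::nat. \<forall>m\<ge>N. \<forall>n\<ge>N. sqrt (Re (cinner (X m - X n) (X m - X n))) < e) \<Longrightarrow>
       (\<exists>l. \<forall>e::real>0. \<exists>N::nat. \<forall>n\<ge>N. sqrt (Re (cinner (X n - l) (X n - l))) < e)"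

definition clinear :: "('a::cvec \<Rightarrow> 'b::cvec) \<Rightarrow> bool" where
  "clinear f \<longleftrightarrow> (\<forall>x y. f (x + y) = f x + f y) \<and> (\<forall>c x. f (scC c x) = scC c (f x))"

definition bounded_clinear :: "('a::cinner_space \<Rightarrow> 'a) \<Rightarrow> bool" where
  "bounded_clinear T \<longleftrightarrow> clinear T \<and> (\<exists>K. \<forall>v. cnorm (T v) \<le> K * cnorm v)"

text \<open>\<open>rep\<close> realises the abstract unital *-algebra \<open>'a\<close> as a unital *-subalgebra of
  \<open>B(h)\<close>: an injective unital *-homomorphism into the bounded operators on \<open>h\<close>.\<close>
definition unital_star_subalg_of_Bh :: "('a::star_alg \<Rightarrow> 'h::chilbert \<Rightarrow> 'h) \<Rightarrow> bool" where
  "unital_star_subalg_of_Bh rep \<longleftrightarrow>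
     inj rep \<and> rep 1 = id \<and>
     (\<forall>x y. rep (x * y) = rep x \<circ> rep y) \<and>
     (\<forall>x y. rep (x + y) = (\<lambda>v. rep x v + rep y v)) \<and>
     (\<forall>c x. rep (scC c x) = (\<lambda>v. scC c (rep x v))) \<and>
     (\<forall>x. bounded_clinear (rep x)) \<and>
     (\<forall>x v w. cinner (rep x v) w = cinner v (rep (star x) w))"

definition posA :: "('a::star_alg \<Rightarrow> 'h::chilbert \<Rightarrow> 'h) \<Rightarrow> 'a \<Rightarrow> bool" where
  "posA rep x \<longleftrightarrow> (\<forall>v. cinner v (rep x v) \<in> \<real> \<and> Re (cinner v (rep x v)) \<ge> 0)"

definition ccp :: "('a::star_alg \<Rightarrow> 'h::chilbert \<Rightarrow> 'h) \<Rightarrow> ('a \<Rightarrow> 'a) \<Rightarrow> bool" where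
  "ccp rep L \<longleftrightarrow> (\<forall>x. L (star x) = star (L x)) \<and>
     (\<forall>(n::nat) (a::nat \<Rightarrow> 'a) b. (\<Sum>i<n. a i * b i) = 0 \<longrightarrow>
        posA rep (\<Sum>i<n. \<Sum>j<n. star (b i) * L (star (a i) * a j) * b j))"

definition pre_hilbert_module ::
  "('a::star_alg \<Rightarrow> 'h::chilbert \<Rightarrow> 'h) \<Rightarrow> ('m::cvec \<Rightarrow> 'a \<Rightarrow> 'm) \<Rightarrow> ('m \<Rightarrow> 'm \<Rightarrow> 'a) \<Rightarrow> bool" where
  "pre_hilbert_module rep ract ip \<longleftrightarrow>
     (\<forall>\<xi> a b. ract \<xi> (a * b) = ract (ract \<xi> a) b) \<and>
     (\<forall>\<xi>. ract \<xi> 1 = \<xi>) \<and>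
     (\<forall>\<xi> \<eta> a. ract (\<xi> + \<eta>) a = ract \<xi> a + ract \<eta> a) \<and>
     (\<forall>\<xi> a b. ract \<xi> (a + b) = ract \<xi> a + ract \<xi> b) \<and>
     (\<forall>c \<xi> a. ract (scC c \<xi>) a = scC c (ract \<xi> a)) \<and>
     (\<forall>c \<xi> a. ract \<xi> (scC c a) = scC c (ract \<xi> a)) \<and>
     (\<forall>\<xi> \<eta> \<zeta>. ip \<xi> (\<eta> + \<zeta>) = ip \<xi> \<eta> + ip \<xi> \<zeta>) \<and>
     (\<forall>\<xi> \<eta> c. ip \<xi> (scC c \<eta>) = scC c (ip \<xi> \<eta>)) \<and>
     (\<forall>\<xi> \<eta> a. ip \<xi> (ract \<eta> a) = ip \<xi> \<eta> * a) \<and>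
     (\<forall>\<xi> \<eta>. ip \<eta> \<xi> = star (ip \<xi> \<eta>)) \<and>
     (\<forall>\<xi>. posA rep (ip \<xi> \<xi>)) \<and>
     (\<forall>\<xi>. ip \<xi> \<xi> = 0 \<longrightarrow> \<xi> = 0)"

definition is_adjoint_of :: "('m \<Rightarrow> 'm \<Rightarrow> 'a) \<Rightarrow> ('m \<Rightarrow> 'm) \<Rightarrow> ('m \<Rightarrow> 'm) \<Rightarrow> bool" where
  "is_adjoint_of ip T S \<longleftrightarrow> (\<forall>\<xi> \<eta>. ip (T \<xi>) \<eta> = ip \<xi> (S \<eta>))"

definition Ba :: "('m \<Rightarrow> 'm \<Rightarrow> 'a) \<Rightarrow> ('m \<Rightarrow> 'm) set" where
  "Ba ip = {T. \<exists>S. is_adjoint_of ip T S}"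

definition canonical_triple ::
  "('a::star_alg \<Rightarrow> 'h::chilbert \<Rightarrow> 'h) \<Rightarrow> ('a \<Rightarrow> 'a) \<Rightarrow> ('m::cvec \<Rightarrow> 'a \<Rightarrow> 'm) \<Rightarrow>
   ('m \<Rightarrow> 'm \<Rightarrow> 'a) \<Rightarrow> ('a \<Rightarrow> 'm \<Rightarrow> 'm) \<Rightarrow> ('a \<Rightarrow> 'm) \<Rightarrow> bool" where
  "canonical_triple rep L ract ip \<pi> \<delta> \<longleftrightarrow>
     pre_hilbert_module rep ract ip \<and>
     \<comment> \<open>\<pi> is a unital *-representation of A in B^a(M)\<close>
     (\<forall>x. \<pi> x \<in> Ba ip \<and> is_adjoint_of ip (\<pi> x) (\<pi> (star x))) \<and>
     \<pi> 1 = id \<and>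
     (\<forall>x y. \<pi> (x * y) = \<pi> x \<circ> \<pi> y) \<and>
     (\<forall>x y. \<pi> (x + y) = (\<lambda>\<xi>. \<pi> x \<xi> + \<pi> y \<xi>)) \<and>
     (\<forall>c x. \<pi> (scC c x) = (\<lambda>\<xi>. scC c (\<pi> x \<xi>))) \<and>
     \<comment> \<open>bimodule compatibility of left and right actions\<close>
     (\<forall>x \<xi> a. \<pi> x (ract \<xi> a) = ract (\<pi> x \<xi>) a) \<and>
     \<comment> \<open>\<delta> is a linear bimodule derivation\<close>
     clinear \<delta> \<and>
     (\<forall>x y. \<delta> (x * y) = \<pi> x (\<delta> y) + ract (\<delta> x) y) \<and>
     \<comment> \<open>M is the right A-linear span of \<delta>(A)\<close>
     (\<forall>\<xi>. \<exists>(n::nat) xs ys. \<xi> = (\<Sum>i<n. ract (\<delta> (xs i)) (ys i))) \<and>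
     \<comment> \<open>L(xy) - xL(y) - L(x)y = \<delta>\<dagger>(x)\<delta>(y), with \<delta>\<dagger>(x) = \<delta>(x*)* = <\<delta>(x*)|\<close>
     (\<forall>x y. L (x * y) - x * L y - L x * y = ip (\<delta> (star x)) (\<delta> y))"

definition ipS :: "('m \<Rightarrow> 'm \<Rightarrow> 'a::star_alg) \<Rightarrow> 'a \<times> 'm \<Rightarrow> 'a \<times> 'm \<Rightarrow> 'a" where
  "ipS ip u v = star (fst u) * fst v + ip (snd u) (snd v)"

type_synonym ('a, 'm) op = "'a \<times> 'm \<Rightarrow> 'a \<times> 'm"

definition EL :: "('m \<Rightarrow> 'm \<Rightarrow> 'a::star_alg) \<Rightarrow> ('a, 'm) op set" where
  "EL ip = {X. \<exists>S. \<forall>u v. ipS ip (X u) v = ipS ip u (S v)}"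

definition adjE :: "('m \<Rightarrow> 'm \<Rightarrow> 'a::star_alg) \<Rightarrow> ('a, 'm) op \<Rightarrow> ('a, 'm) op" where
  "adjE ip X = (SOME S. \<forall>u v. ipS ip (X u) v = ipS ip u (S v))"

definition ezero :: "('a::star_alg, 'm::cvec) op" where
  "ezero = (\<lambda>u. (0, 0))"

definition eadd :: "('a::star_alg, 'm::cvec) op \<Rightarrow> ('a, 'm) op \<Rightarrow> ('a, 'm) op" where
  "eadd X Y = (\<lambda>u. (fst (X u) + fst (Y u), snd (X u) + snd (Y u)))"

definition ediff :: "('a::star_alg, 'm::cvec) op \<Rightarrow> ('a, 'm) op \<Rightarrow> ('a, 'm) op" where
  "ediff X Y = (\<lambda>u. (fst (X u) - fst (Y u), snd (X u) - snd (Y u)))"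

definition escale :: "complex \<Rightarrow> ('a::star_alg, 'm::cvec) op \<Rightarrow> ('a, 'm) op" where
  "escale c X = (\<lambda>u. (scC c (fst (X u)), scC c (snd (X u))))"

definition tpi :: "('a::star_alg \<Rightarrow> 'm \<Rightarrow> 'm) \<Rightarrow> 'a \<Rightarrow> ('a, 'm) op" where
  "tpi \<pi> x = (\<lambda>u. (x * fst u, \<pi> x (snd u)))"

definition lact :: "('a::star_alg \<Rightarrow> 'm \<Rightarrow> 'm) \<Rightarrow> 'a \<Rightarrow> ('a, 'm) op \<Rightarrow> ('a, 'm) op" where
  "lact \<pi> x R = tpi \<pi> x \<circ> R"

definition ract_E :: "('a::star_alg \<Rightarrow> 'm \<Rightarrow> 'm) \<Rightarrow> ('a, 'm) op \<Rightarrow> 'a \<Rightarrow> ('a, 'm) op" where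
  "ract_E \<pi> R x = R \<circ> tpi \<pi> x"

definition clinearE :: "('a::star_alg \<Rightarrow> ('a, 'm::cvec) op) \<Rightarrow> bool" where
  "clinearE g \<longleftrightarrow> (\<forall>x y. g (x + y) = eadd (g x) (g y)) \<and> (\<forall>c x. g (scC c x) = escale c (g x))"

definition hoch_b2 :: "('a::star_alg \<Rightarrow> 'm::cvec \<Rightarrow> 'm) \<Rightarrow> ('a \<Rightarrow> 'a \<Rightarrow> ('a, 'm) op) \<Rightarrow>
    'a \<Rightarrow> 'a \<Rightarrow> 'a \<Rightarrow> ('a, 'm) op" where
  "hoch_b2 \<pi> f a1 a2 a3 =
     ediff (eadd (ediff (lact \<pi> a1 (f a2 a3)) (f (a1 * a2) a3)) (f a1 (a2 * a3))) (ract_E \<pi> (f a1 a2) a3)"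

definition hoch_b1 :: "('a::star_alg \<Rightarrow> 'm::cvec \<Rightarrow> 'm) \<Rightarrow> ('a \<Rightarrow> ('a, 'm) op) \<Rightarrow>
    'a \<Rightarrow> 'a \<Rightarrow> ('a, 'm) op" where
  "hoch_b1 \<pi> g a1 a2 = eadd (ediff (lact \<pi> a1 (g a2)) (g (a1 * a2))) (ract_E \<pi> (g a1) a2)"

definition H2_vanishes :: "('m::cvec \<Rightarrow> 'm \<Rightarrow> 'a::star_alg) \<Rightarrow> ('a \<Rightarrow> 'm \<Rightarrow> 'm) \<Rightarrow> bool" where
  "H2_vanishes ip \<pi> \<longleftrightarrow>
     (\<forall>f :: 'a \<Rightarrow> 'a \<Rightarrow> ('a, 'm) op.
        (\<forall>x y. f x y \<in> EL ip) \<and> (\<forall>y. clinearE (\<lambda>x. f x y)) \<and> (\<forall>x. clinearE (f x)) \<and>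
        (\<forall>a1 a2 a3. hoch_b2 \<pi> f a1 a2 a3 = ezero)
        \<longrightarrow> (\<exists>g :: 'a \<Rightarrow> ('a, 'm) op. (\<forall>x. g x \<in> EL ip) \<and> clinearE g \<and>
               (\<forall>a1 a2. f a1 a2 = hoch_b1 \<pi> g a1 a2)))"

text \<open>A power series is its coefficient sequence; product is the Cauchy product
  (composition in \<open>E_L\<close>), \<open>*\<close> is the coefficientwise adjoint.\<close>
definition ps_mult :: "(nat \<Rightarrow> ('a::star_alg, 'm::cvec) op) \<Rightarrow> (nat \<Rightarrow> ('a, 'm) op) \<Rightarrow> nat \<Rightarrow> ('a, 'm) op" where
  "ps_mult P Q = (\<lambda>k u. ((\<Sum>i\<le>k. fst (P i (Q (k - i) u))), (\<Sum>i\<le>k. snd (P i (Q (k - i) u)))))"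

definition ps_star :: "('m \<Rightarrow> 'm \<Rightarrow> 'a::star_alg) \<Rightarrow> (nat \<Rightarrow> ('a, 'm) op) \<Rightarrow> nat \<Rightarrow> ('a, 'm) op" where
  "ps_star ip P = (\<lambda>k. adjE ip (P k))"

text \<open>Matrix entries of \<open>X \<in> B^a(A \<oplus> M)\<close>: (0,0) in \<open>A \<cong> B^a(A)\<close>, (1,0) in \<open>M \<cong> B^a(A,M)\<close>,
  (0,1) in \<open>M* \<subseteq> (M \<Rightarrow> A)\<close>, (1,1) in \<open>B^a(M)\<close>.\<close>
definition e00 :: "('a::star_alg, 'm::cvec) op \<Rightarrow> 'a" where "e00 X = fst (X (1, 0))"
definition e10 :: "('a::star_alg, 'm::cvec) op \<Rightarrow> 'm" where "e10 X = snd (X (1, 0))"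
definition e01 :: "('a::star_alg, 'm::cvec) op \<Rightarrow> 'm \<Rightarrow> 'a" where "e01 X = (\<lambda>\<eta>. fst (X (0, \<eta>)))"
definition e11 :: "('a::star_alg, 'm::cvec) op \<Rightarrow> 'm \<Rightarrow> 'm" where "e11 X = (\<lambda>\<eta>. snd (X (0, \<eta>)))"

definition clinear_fun :: "('a::cvec \<Rightarrow> 'm \<Rightarrow> 'b::cvec) \<Rightarrow> bool" where
  "clinear_fun F \<longleftrightarrow> (\<forall>\<eta>. clinear (\<lambda>x. F x \<eta>))"

end

theory Submission
  imports Defs "HOL-Library.Function_Algebras" "HOL-Library.Product_Plus"
begin

text \<open>The coefficients \<beta>_k of \<beta> = \<Sum> t^k \<beta>_k are constructed by induction on k, starting from
  \<beta>_0(x) = \<pi>~(x) and the self-adjoint off-diagonal matrix \<beta>_1(x) with entries \<delta>(x) and \<delta>\<dagger>(x);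
  multiplicativity in orders 0 and 1 holds because \<pi> is a *-representation and \<delta> a bimodule
  derivation. If \<beta>_0, ..., \<beta>_n are multiplicative up to order n, then the obstruction
  F(x, y) = \<Sum>_{0 < i < n+1} \<beta>_i(x) \<beta>_{n+1-i}(y) is a Hochschild 2-cocycle with values in E_L, so
  H^2(\<A>, E_L) = 0 provides a linear \<beta>_{n+1} with b \<beta>_{n+1} = -F, which is multiplicativity in
  order n + 1. This equation is affine in \<beta>_{n+1}, so solutions may be averaged: averaging with
  x \<mapsto> \<beta>_{n+1}(x*)* makes \<beta>_{n+1} *-preserving, and averaging with (-1)^{n+1} \<gamma> \<beta>_{n+1} \<gamma> for the
  grading \<gamma> = 1 \<oplus> -1 of \<A> \<oplus> M makes it of parity n + 1. In order 2, L - (\<beta>_2)_00 is a derivation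
  of \<A> by the relation between L and \<delta>, and adding it in the (0,0) corner achieves (\<beta>_2)_00 = L.
  Even operators are diagonal and odd ones off-diagonal, which gives the pattern of powers of t
  in the four entries.\<close>

lemma eq_self_add_self_imp_zero: "(x::'b::ab_group_add) = x + x \<Longrightarrow> x = 0"
  by (metis add_cancel_left_right)

lemma scC_zero_right [simp]: "scC c (0::'a::cvec) = 0"
  by (rule eq_self_add_self_imp_zero) (metis scC_add_right[of c 0 0] add_0)

lemma scC_minus_right: "scC c (- (x::'a::cvec)) = - scC c x"
  by (metis scC_add_right[of c x "-x"] add.right_inverse scC_zero_right add_eq_0_iff)

lemma scC_diff_right: "scC c ((x::'a::cvec) - y) = scC c x - scC c y"
  using scC_add_right[of c x "-y"] by (simp add: scC_minus_right)

lemma scC_sum_right: "scC c (sum f A) = (\<Sum>i\<in>A. scC c (f i :: 'a::cvec))"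
  by (induction A rule: infinite_finite_induct) (auto simp: scC_add_right)

lemma scC_half_add_self: "scC (1/2) ((x::'a::cvec) + x) = x"
proof -
  have "x + x = scC 2 x" using scC_add_left[of 1 1 x] by (simp add: scC_one)
  then show ?thesis by (simp add: scC_scC scC_one)
qed

lemma cvec_eq_minus_self: "(x::'a::cvec) = - x \<Longrightarrow> x = 0"
  by (metis add.right_inverse scC_half_add_self scC_zero_right)

lemma star_one [simp]: "star (1::'a::star_alg) = 1"
  by (metis star_mult star_star mult_1_left)

instantiation prod :: (cvec, cvec) cvec
begin
definition scC_prod :: "complex \<Rightarrow> 'a \<times> 'b \<Rightarrow> 'a \<times> 'b" where
  "scC_prod c u = (scC c (fst u), scC c (snd u))"
instance by standard (auto simp: scC_prod_def scC_add_right scC_add_left scC_scC scC_one)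
end

lemma fst_scC [simp]: "fst (scC c u) = scC c (fst u)"
  and snd_scC [simp]: "snd (scC c u) = scC c (snd u)"
  by (auto simp: scC_prod_def)

instantiation "fun" :: (type, cvec) cvec
begin
definition scC_fun :: "complex \<Rightarrow> ('a \<Rightarrow> 'b) \<Rightarrow> 'a \<Rightarrow> 'b" where
  "scC_fun c f = (\<lambda>x. scC c (f x))"
instance by standard (auto simp: scC_fun_def scC_add_right scC_add_left scC_scC scC_one)
end

lemma scC_fun_apply [simp]: "scC c f x = scC c (f x)"
  by (simp add: scC_fun_def)

lemma sum_fun_apply: "sum f A x = (\<Sum>i\<in>A. f i x)"
  by (induction A rule: infinite_finite_induct) auto

lemma sum_comp_right: "sum f A \<circ> X = (\<Sum>i\<in>A. f i \<circ> X)"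
  by (auto simp: fun_eq_iff sum_fun_apply)

lemma comp_add_left: "(X + Y) \<circ> T = (X \<circ> T) + (Y \<circ> T)"
  by (auto simp: fun_eq_iff)

lemma comp_uminus_left: "(- X) \<circ> T = - (X \<circ> T)"
  by (auto simp: fun_eq_iff)

lemma comp_scC_left: "scC c X \<circ> T = scC c (X \<circ> T)"
  by (auto simp: fun_eq_iff)

lemma eadd_eq: "eadd X Y = X + Y"
  and ediff_eq: "ediff X Y = X - Y"
  and ezero_eq: "ezero = 0"
  and escale_eq: "escale c X = scC c X"
  by (auto simp: eadd_def ediff_def ezero_def escale_def fun_eq_iff prod_eq_iff)

lemma clinearE_iff:
  "clinearE g \<longleftrightarrow> (\<forall>x y. g (x + y) = g x + g y) \<and> (\<forall>c x. g (scC c x) = scC c (g x))"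
  by (simp add: clinearE_def eadd_eq escale_eq)

lemma clinearE_add: "clinearE g \<Longrightarrow> g (x + y) = g x + g y"
  and clinearE_scC: "clinearE g \<Longrightarrow> g (scC c x) = scC c (g x)"
  by (simp_all add: clinearE_iff)

lemma subalg_of_Bh_star_faithful:
  fixes rep :: "'a::star_alg \<Rightarrow> 'h::chilbert \<Rightarrow> 'h" and a :: 'a
  assumes rep: "unital_star_subalg_of_Bh rep" and a: "star a * a = 0"
  shows "a = 0"
proof -
  from rep have inj: "inj rep" and mult: "\<And>x y. rep (x * y) = rep x \<circ> rep y"
    and add: "\<And>x y. rep (x + y) = (\<lambda>v. rep x v + rep y v)"
    and adj: "\<And>x v w. cinner (rep x v) w = cinner v (rep (star x) w)"
    unfolding unital_star_subalg_of_Bh_def by auto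
  have rep_zero: "rep 0 v = 0" for v
    by (rule eq_self_add_self_imp_zero) (metis add[of 0 0] add_0)
  have cinner_zero: "cinner v (0::'h) = 0" for v
    by (rule eq_self_add_self_imp_zero) (metis cinner_add_right[of v 0 0] add_0)
  have "rep a v = 0" for v
  proof (rule cinner_definite)
    have "cinner (rep a v) (rep a v) = cinner v (rep (star a * a) v)" by (simp add: adj mult)
    then show "cinner (rep a v) (rep a v) = 0" by (simp add: a rep_zero cinner_zero)
  qed
  then have "rep a = rep 0" using rep_zero by auto
  then show ?thesis using inj by (simp add: inj_eq)
qed

section \<open>Hermitian forms with values in a *-algebra and their adjointable maps\<close>

locale herm_form =
  fixes B :: "'v::cvec \<Rightarrow> 'v \<Rightarrow> 'a::star_alg"
  assumes add_right: "B u (v + w) = B u v + B u w"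
    and scC_right: "B u (scC c v) = scC c (B u v)"
    and sym: "B v u = star (B u v)"
    and nondegenerate: "(\<And>v. B u v = 0) \<Longrightarrow> u = 0"
begin

lemma add_left: "B (u + v) w = B u w + B v w"
  by (metis add_right star_add sym)

lemma zero_left [simp]: "B 0 w = 0"
  by (rule eq_self_add_self_imp_zero) (metis add_left[of 0 0 w] add_0)

lemma zero_right [simp]: "B w 0 = 0"
  by (rule eq_self_add_self_imp_zero) (metis add_right[of w 0 0] add_0)

lemma minus_left: "B (- u) w = - B u w"
  by (metis add_left[of u "-u" w] add.right_inverse zero_left add_eq_0_iff)

lemma minus_right: "B w (- u) = - B w u"
  by (metis add_right[of w u "-u"] add.right_inverse zero_right add_eq_0_iff)

lemma scC_left: "B (scC c u) v = scC (cnj c) (B u v)"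
  by (metis scC_right star_scC sym)

lemma eq_if_form_eq: assumes "\<And>v. B u v = B u' v" shows "u = u'"
proof -
  have "B (u - u') v = 0" for v
    using add_left[of u "- u'" v] by (simp add: minus_left assms)
  then show ?thesis using nondegenerate[of "u - u'"] by simp
qed

definition adjointable :: "('v \<Rightarrow> 'v) \<Rightarrow> bool" where
  "adjointable T \<longleftrightarrow> (\<exists>S. \<forall>u v. B (T u) v = B u (S v))"

definition adjoint :: "('v \<Rightarrow> 'v) \<Rightarrow> 'v \<Rightarrow> 'v" where
  "adjoint T = (SOME S. \<forall>u v. B (T u) v = B u (S v))"

lemma adjointableI: "(\<And>u v. B (T u) v = B u (S v)) \<Longrightarrow> adjointable T"
  unfolding adjointable_def by blast

lemma adjoint_right: assumes "adjointable T" shows "B (T u) v = B u (adjoint T v)"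
proof -
  from assms obtain S where "\<forall>u v. B (T u) v = B u (S v)" unfolding adjointable_def by blast
  then have "\<forall>u v. B (T u) v = B u (adjoint T v)"
    unfolding adjoint_def by (rule someI[where P = "\<lambda>S. \<forall>u v. B (T u) v = B u (S v)"])
  then show ?thesis by blast
qed

lemma adjoint_left: "adjointable T \<Longrightarrow> B (adjoint T u) v = B u (T v)"
  by (metis adjoint_right sym)

lemma adjoint_unique: assumes "\<And>u v. B (T u) v = B u (S v)" shows "adjoint T = S"
proof
  fix v
  have "adjointable T" using assms by (rule adjointableI)
  then show "adjoint T v = S v"
    by (intro eq_if_form_eq) (metis adjoint_left assms sym)
qed

lemma adjointable_add_apply: "adjointable T \<Longrightarrow> T (u + v) = T u + T v"
  by (rule eq_if_form_eq) (simp add: adjoint_right add_left)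

lemma adjointable_minus_apply: assumes "adjointable T" shows "T (- u) = - T u"
  by (rule eq_if_form_eq) (simp add: adjoint_right[OF assms] minus_left)

lemma adjointable_scC_apply: "adjointable T \<Longrightarrow> T (scC c u) = scC c (T u)"
  by (rule eq_if_form_eq) (simp add: adjoint_right scC_left)

lemma adjointable_zero_apply: "adjointable T \<Longrightarrow> T 0 = 0"
  by (metis adjointable_minus_apply add.inverse_neutral add_eq_0_iff cvec_eq_minus_self)

lemma adjointable_sum_apply: "adjointable T \<Longrightarrow> T (sum f A) = (\<Sum>i\<in>A. T (f i))"
  by (induction A rule: infinite_finite_induct)
    (simp_all add: adjointable_add_apply adjointable_zero_apply)

lemma adjoint_adjointable: "adjointable T \<Longrightarrow> adjointable (adjoint T)"
  by (rule adjointableI[where S = T]) (rule adjoint_left)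

lemma adjoint_adjoint: "adjointable T \<Longrightarrow> adjoint (adjoint T) = T"
  by (rule adjoint_unique) (rule adjoint_left)

lemma adjointable_comp: "adjointable T \<Longrightarrow> adjointable T' \<Longrightarrow> adjointable (T \<circ> T')"
  by (rule adjointableI[where S = "adjoint T' \<circ> adjoint T"]) (simp add: adjoint_right)

lemma adjoint_comp: "adjointable T \<Longrightarrow> adjointable T' \<Longrightarrow> adjoint (T \<circ> T') = adjoint T' \<circ> adjoint T"
  by (rule adjoint_unique) (simp add: adjoint_right)

lemma adjointable_add: "adjointable T \<Longrightarrow> adjointable T' \<Longrightarrow> adjointable (T + T')"
  by (rule adjointableI[where S = "adjoint T + adjoint T'"]) (simp add: adjoint_right add_left add_right)

lemma adjoint_add: "adjointable T \<Longrightarrow> adjointable T' \<Longrightarrow> adjoint (T + T') = adjoint T + adjoint T'"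
  by (rule adjoint_unique) (simp add: adjoint_right add_left add_right)

lemma adjointable_uminus: "adjointable T \<Longrightarrow> adjointable (- T)"
  by (rule adjointableI[where S = "- adjoint T"]) (simp add: adjoint_right minus_left minus_right)

lemma adjoint_uminus: "adjointable T \<Longrightarrow> adjoint (- T) = - adjoint T"
  by (rule adjoint_unique) (simp add: adjoint_right minus_left minus_right)

lemma adjointable_scC: "adjointable T \<Longrightarrow> adjointable (scC c T)"
  by (rule adjointableI[where S = "scC (cnj c) (adjoint T)"]) (simp add: adjoint_right scC_left scC_right)

lemma adjoint_scC: "adjointable T \<Longrightarrow> adjoint (scC c T) = scC (cnj c) (adjoint T)"
  by (rule adjoint_unique) (simp add: adjoint_right scC_left scC_right)

lemma adjoint_zero: "adjoint 0 = 0"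
  by (rule adjoint_unique) simp

lemma adjointable_sum: "(\<And>i. i \<in> A \<Longrightarrow> adjointable (f i)) \<Longrightarrow> adjointable (sum f A)"
  by (induction A rule: infinite_finite_induct)
    (auto simp: adjointable_add intro: adjointableI[where S = 0])

lemma adjoint_sum:
  "(\<And>i. i \<in> A \<Longrightarrow> adjointable (f i)) \<Longrightarrow> adjoint (sum f A) = (\<Sum>i\<in>A. adjoint (f i))"
  by (induction A rule: infinite_finite_induct) (simp_all add: adjoint_zero adjoint_add adjointable_sum)

lemma comp_add_right: "adjointable T \<Longrightarrow> T \<circ> (X + Y) = (T \<circ> X) + (T \<circ> Y)"
  by (simp add: fun_eq_iff adjointable_add_apply)

lemma comp_uminus_right: "adjointable T \<Longrightarrow> T \<circ> (- X) = - (T \<circ> X)"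
  by (simp add: fun_eq_iff adjointable_minus_apply)

lemma comp_scC_right: "adjointable T \<Longrightarrow> T \<circ> scC c X = scC c (T \<circ> X)"
  by (simp add: fun_eq_iff adjointable_scC_apply)

lemma comp_sum_right: "adjointable T \<Longrightarrow> T \<circ> sum f A = (\<Sum>i\<in>A. T \<circ> f i)"
  by (simp add: fun_eq_iff adjointable_sum_apply sum_fun_apply)

end

section \<open>The canonical data of \<open>\<L>\<close> and the algebra \<open>E\<^sub>L\<close>\<close>

definition grading :: "'a \<times> 'm::group_add \<Rightarrow> 'a \<times> 'm" where
  "grading u = (fst u, - snd u)"

definition graded_conj :: "('a \<times> 'm::group_add \<Rightarrow> 'a \<times> 'm) \<Rightarrow> 'a \<times> 'm \<Rightarrow> 'a \<times> 'm" where
  "graded_conj X = grading \<circ> X \<circ> grading"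

definition neg_one_pow :: "nat \<Rightarrow> 'b::uminus \<Rightarrow> 'b" where
  "neg_one_pow k X = (if even k then X else - X)"

definition corner :: "'a::star_alg \<Rightarrow> ('a, 'm::cvec) op" where
  "corner a = (\<lambda>u. (a * fst u, 0))"

lemma grading_grading [simp]: "grading (grading u) = u"
  by (simp add: grading_def)

lemma graded_conj_comp: "graded_conj (X \<circ> Y) = graded_conj X \<circ> graded_conj Y"
  by (simp add: graded_conj_def fun_eq_iff)

lemma graded_conj_add: "graded_conj (X + Y) = graded_conj X + graded_conj Y"
  and graded_conj_uminus: "graded_conj (- X) = - graded_conj X"
  and graded_conj_graded_conj: "graded_conj (graded_conj X) = X"
  for X Y :: "'a::ab_group_add \<times> 'm::ab_group_add \<Rightarrow> 'a \<times> 'm"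
  by (simp_all add: graded_conj_def grading_def fun_eq_iff)

lemma graded_conj_scC: "graded_conj (scC c X) = scC c (graded_conj X)"
  for X :: "'a::cvec \<times> 'm::cvec \<Rightarrow> 'a \<times> 'm"
  by (simp add: graded_conj_def grading_def fun_eq_iff scC_minus_right scC_prod_def)

lemma graded_conj_sum:
  fixes f :: "'i \<Rightarrow> 'a::ab_group_add \<times> 'm::ab_group_add \<Rightarrow> 'a \<times> 'm"
  shows "graded_conj (sum f A) = (\<Sum>i\<in>A. graded_conj (f i))"
  by (simp add: graded_conj_def grading_def fun_eq_iff prod_eq_iff sum_fun_apply fst_sum snd_sum sum_negf)

lemma neg_one_pow_add: "neg_one_pow k (X + Y) = neg_one_pow k X + neg_one_pow k (Y::'b::ab_group_add)"
  and neg_one_pow_neg_one_pow: "neg_one_pow k (neg_one_pow k X) = X"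
  and neg_one_pow_sum: "neg_one_pow k (sum f A) = (\<Sum>i\<in>A. neg_one_pow k (f i :: 'b))"
  by (simp_all add: neg_one_pow_def sum_negf)

lemma neg_one_pow_scC: "neg_one_pow k (scC c Z) = scC c (neg_one_pow k (Z::'c::cvec))"
  by (simp add: neg_one_pow_def scC_minus_right)

lemma graded_conj_neg_one_pow: "graded_conj (neg_one_pow k W) = neg_one_pow k (graded_conj W)"
  for W :: "'a::ab_group_add \<times> 'm::ab_group_add \<Rightarrow> 'a \<times> 'm"
  by (simp add: neg_one_pow_def graded_conj_uminus)

text \<open>The properties of \<open>(M, \<pi>, \<delta>)\<close> and \<open>L\<close> used by the construction. \<open>\<A> \<subseteq> B(h)\<close> enters only
  through \<open>star_faithful\<close>, which makes the inner product of \<open>\<A> \<oplus> M\<close> nondegenerate.\<close>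

locale canonical_data =
  fixes L :: "'a::star_alg \<Rightarrow> 'a"
    and ract :: "'m::cvec \<Rightarrow> 'a \<Rightarrow> 'm"
    and ip :: "'m \<Rightarrow> 'm \<Rightarrow> 'a"
    and \<pi> :: "'a \<Rightarrow> 'm \<Rightarrow> 'm"
    and \<delta> :: "'a \<Rightarrow> 'm"
  assumes star_faithful: "star a * a = 0 \<Longrightarrow> a = 0"
    and ract_assoc: "ract \<xi> (a * b) = ract (ract \<xi> a) b"
    and ract_one: "ract \<xi> 1 = \<xi>"
    and ract_add_left: "ract (\<xi> + \<eta>) a = ract \<xi> a + ract \<eta> a"
    and ract_scC_left: "ract (scC c \<xi>) a = scC c (ract \<xi> a)"
    and ip_add_right: "ip \<xi> (\<eta> + \<zeta>) = ip \<xi> \<eta> + ip \<xi> \<zeta>"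
    and ip_scC_right: "ip \<xi> (scC c \<eta>) = scC c (ip \<xi> \<eta>)"
    and ip_ract_right: "ip \<xi> (ract \<eta> a) = ip \<xi> \<eta> * a"
    and ip_sym: "ip \<eta> \<xi> = star (ip \<xi> \<eta>)"
    and ip_definite: "ip \<xi> \<xi> = 0 \<Longrightarrow> \<xi> = 0"
    and pi_adjoint: "ip (\<pi> x \<xi>) \<eta> = ip \<xi> (\<pi> (star x) \<eta>)"
    and pi_mult: "\<pi> (x * y) = \<pi> x \<circ> \<pi> y"
    and pi_add: "\<pi> (x + y) = (\<lambda>\<xi>. \<pi> x \<xi> + \<pi> y \<xi>)"
    and pi_scC: "\<pi> (scC c x) = (\<lambda>\<xi>. scC c (\<pi> x \<xi>))"
    and pi_ract: "\<pi> x (ract \<xi> a) = ract (\<pi> x \<xi>) a"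
    and delta_add: "\<delta> (x + y) = \<delta> x + \<delta> y"
    and delta_scC: "\<delta> (scC c x) = scC c (\<delta> x)"
    and delta_mult: "\<delta> (x * y) = \<pi> x (\<delta> y) + ract (\<delta> x) y"
    and L_add: "L (x + y) = L x + L y"
    and L_scC: "L (scC c x) = scC c (L x)"
    and L_star: "L (star x) = star (L x)"
    and L_mult: "L (x * y) - x * L y - L x * y = ip (\<delta> (star x)) (\<delta> y)"
    and H2: "H2_vanishes ip \<pi>"
begin

sublocale M: herm_form ip
proof
  fix u :: 'm
  assume "\<And>v. ip u v = 0"
  then show "u = 0" using ip_definite by blast
qed (simp_all add: ip_add_right ip_scC_right flip: ip_sym)

sublocale S: herm_form "ipS ip"
proof
  fix u v w :: "'a \<times> 'm" and c
  show "ipS ip u (v + w) = ipS ip u v + ipS ip u w"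
    by (simp add: ipS_def distrib_left ip_add_right algebra_simps)
  show "ipS ip u (scC c v) = scC c (ipS ip u v)"
    by (simp add: ipS_def scC_mult_right ip_scC_right scC_add_right)
  show "ipS ip v u = star (ipS ip u v)"
    by (simp add: ipS_def star_add star_mult star_star ip_sym[of "snd v"])
next
  fix u :: "'a \<times> 'm"
  assume u: "\<And>v. ipS ip u v = 0"
  have "star (fst u) * fst u = 0" using u[of "(fst u, 0)"] by (simp add: ipS_def)
  then have "fst u = 0" by (rule star_faithful)
  moreover have "ip (snd u) (snd u) = 0" using u[of "(0, snd u)"] by (simp add: ipS_def)
  then have "snd u = 0" by (rule ip_definite)
  ultimately show "u = 0" by (simp add: prod_eq_iff)
qed

lemma EL_iff_adjointable: "X \<in> EL ip \<longleftrightarrow> S.adjointable X"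
  by (simp add: EL_def S.adjointable_def)

lemma adjE_eq_adjoint: "adjE ip X = S.adjoint X"
  by (simp add: adjE_def S.adjoint_def)

lemma ip_ract_left: "ip (ract \<xi> a) \<eta> = star a * ip \<xi> \<eta>"
  by (simp add: ip_sym[of _ \<eta>] ip_ract_right star_mult star_star)

lemma pi_adjointable: "M.adjointable (\<pi> x)"
  using pi_adjoint by (rule M.adjointableI)

lemma pi_minus_apply: "\<pi> x (- \<xi>) = - \<pi> x \<xi>"
  and pi_zero_apply: "\<pi> x 0 = 0"
  using pi_adjointable by (rule M.adjointable_minus_apply, rule M.adjointable_zero_apply)

definition delta_mat :: "'a \<Rightarrow> ('a, 'm) op" where
  "delta_mat x = (\<lambda>u. (ip (\<delta> (star x)) (snd u), ract (\<delta> x) (fst u)))"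

lemma tpi_adjoint_right: "ipS ip (tpi \<pi> x u) v = ipS ip u (tpi \<pi> (star x) v)"
  by (simp add: ipS_def tpi_def star_mult mult.assoc pi_adjoint)

lemma tpi_adjointable: "S.adjointable (tpi \<pi> x)"
  using tpi_adjoint_right by (rule S.adjointableI)

lemma tpi_adjoint: "S.adjoint (tpi \<pi> x) = tpi \<pi> (star x)"
  using tpi_adjoint_right by (rule S.adjoint_unique)

lemma delta_mat_adjoint_right: "ipS ip (delta_mat x u) v = ipS ip u (delta_mat (star x) v)"
  by (simp add: ipS_def delta_mat_def ip_ract_left ip_ract_right star_star add.commute flip: ip_sym)

lemma delta_mat_adjointable: "S.adjointable (delta_mat x)"
  using delta_mat_adjoint_right by (rule S.adjointableI)

lemma delta_mat_adjoint: "S.adjoint (delta_mat x) = delta_mat (star x)"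
  using delta_mat_adjoint_right by (rule S.adjoint_unique)

lemma corner_adjointable: "S.adjointable (corner a)"
  by (rule S.adjointableI[where S = "corner (star a)"]) (simp add: ipS_def corner_def star_mult mult.assoc)

lemma grading_adjoint_right: "ipS ip (grading u) v = ipS ip u (grading v)"
  by (simp add: ipS_def grading_def M.minus_left M.minus_right)

lemma grading_adjointable: "S.adjointable grading"
  using grading_adjoint_right by (rule S.adjointableI)

lemma grading_adjoint: "S.adjoint grading = grading"
  using grading_adjoint_right by (rule S.adjoint_unique)

lemma clinearE_tpi: "clinearE (tpi \<pi>)"
  by (simp add: clinearE_iff tpi_def fun_eq_iff distrib_right pi_add scC_mult_left pi_scC scC_prod_def)

lemma clinearE_delta_mat: "clinearE delta_mat"
  by (simp add: clinearE_iff delta_mat_def fun_eq_iff star_add delta_add M.add_left ract_add_left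
      star_scC delta_scC M.scC_left ract_scC_left scC_prod_def)

lemma tpi_mult: "tpi \<pi> (x * y) = tpi \<pi> x \<circ> tpi \<pi> y"
  by (simp add: tpi_def fun_eq_iff mult.assoc pi_mult)

lemma delta_mat_mult: "delta_mat (x * y) = (tpi \<pi> x \<circ> delta_mat y) + (delta_mat x \<circ> tpi \<pi> y)"
  by (simp add: delta_mat_def tpi_def fun_eq_iff star_mult delta_mult M.add_left pi_adjoint
      ip_ract_left star_star pi_ract ract_assoc ract_add_left add.commute)

lemma graded_conj_adjointable: "S.adjointable X \<Longrightarrow> S.adjointable (graded_conj X)"
  unfolding graded_conj_def by (intro S.adjointable_comp grading_adjointable)

lemma graded_conj_adjoint: "S.adjointable X \<Longrightarrow> S.adjoint (graded_conj X) = graded_conj (S.adjoint X)"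
  unfolding graded_conj_def
  by (simp add: S.adjoint_comp S.adjointable_comp grading_adjointable grading_adjoint comp_assoc)

lemma graded_conj_tpi: "graded_conj (tpi \<pi> x) = tpi \<pi> x"
  by (simp add: graded_conj_def fun_eq_iff tpi_def grading_def pi_minus_apply)

lemma graded_conj_delta_mat: "graded_conj (delta_mat x) = - delta_mat x"
  by (simp add: graded_conj_def fun_eq_iff delta_mat_def grading_def M.minus_right)

end

lemma e00_add: "e00 (X + Y) = e00 X + e00 Y"
  and e00_scC: "e00 (scC c X) = scC c (e00 X)"
  and e10_add: "e10 (X + Y) = e10 X + e10 Y"
  and e10_scC: "e10 (scC c X) = scC c (e10 X)"
  and e01_add: "e01 (X + Y) \<eta> = e01 X \<eta> + e01 Y \<eta>"
  and e01_scC: "e01 (scC c X) \<eta> = scC c (e01 X \<eta>)"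
  and e11_add: "e11 (X + Y) \<eta> = e11 X \<eta> + e11 Y \<eta>"
  and e11_scC: "e11 (scC c X) \<eta> = scC c (e11 X \<eta>)"
  by (simp_all add: e00_def e10_def e01_def e11_def)

context canonical_data
begin

lemma e00_eq_ipS: "e00 X = ipS ip (1, 0) (X (1, 0))"
  by (simp add: ipS_def e00_def)

lemma e00_tpi_comp: "e00 (tpi \<pi> x \<circ> Y) = x * e00 Y"
  by (simp add: e00_def tpi_def)

lemma e00_comp_tpi: assumes X: "S.adjointable X" shows "e00 (X \<circ> tpi \<pi> y) = e00 X * y"
proof -
  have ipS_zero_right: "ipS ip u (a, 0) = star (fst u) * a" for u a by (simp add: ipS_def)
  have "e00 (X \<circ> tpi \<pi> y) = ipS ip (1, 0) (X (y, 0))" by (simp add: e00_eq_ipS tpi_def pi_zero_apply)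
  also have "\<dots> = star (fst (S.adjoint X (1, 0))) * y"
    using S.adjoint_left[OF X, of "(1, 0)" "(y, 0)"] by (simp add: ipS_zero_right)
  also have "star (fst (S.adjoint X (1, 0))) = e00 X"
    using S.adjoint_left[OF X, of "(1, 0)" "(1, 0)"] by (simp add: e00_eq_ipS ipS_zero_right)
  finally show ?thesis .
qed

lemma e00_adjoint: assumes "S.adjointable Y" shows "e00 (S.adjoint Y) = star (e00 Y)"
  by (metis S.adjoint_left[OF assms] S.sym e00_eq_ipS)

lemma e00_graded_conj: "e00 (graded_conj X) = e00 X"
  and e00_corner: "e00 (corner a) = a"
  and e00_delta_mat_comp: "e00 (delta_mat x \<circ> delta_mat y) = ip (\<delta> (star x)) (\<delta> y)"
  by (simp_all add: e00_def graded_conj_def grading_def corner_def delta_mat_def ract_one)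

lemma graded_conj_apply: "graded_conj X u = grading (X (grading u))"
  by (simp add: graded_conj_def)

lemma even_off_diagonal_zero:
  assumes X: "S.adjointable X" and even: "graded_conj X = X"
  shows "e10 X = 0" and "e01 X = (\<lambda>_. 0)"
proof -
  have "X (1, 0) = grading (X (1, 0))"
    using graded_conj_apply[of X "(1, 0)"] by (simp add: even grading_def)
  then show "e10 X = 0" unfolding e10_def grading_def by (metis cvec_eq_minus_self snd_conv)
  show "e01 X = (\<lambda>_. 0)"
  proof
    fix \<eta>
    have "X (0, \<eta>) = grading (- X (0, \<eta>))"
      using graded_conj_apply[of X "(0, \<eta>)"] S.adjointable_minus_apply[OF X, of "(0, \<eta>)"]
      by (simp add: even grading_def)
    then show "e01 X \<eta> = 0" unfolding e01_def grading_def by (metis cvec_eq_minus_self fst_conv fst_uminus)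
  qed
qed

lemma odd_diagonal_zero:
  assumes X: "S.adjointable X" and odd: "graded_conj X = - X"
  shows "e00 X = 0" and "e11 X = (\<lambda>_. 0)"
proof -
  have "- X (1, 0) = grading (X (1, 0))"
    using graded_conj_apply[of X "(1, 0)"] by (simp add: odd grading_def)
  then show "e00 X = 0" unfolding e00_def grading_def by (metis cvec_eq_minus_self fst_conv fst_uminus)
  show "e11 X = (\<lambda>_. 0)"
  proof
    fix \<eta>
    have "- X (0, \<eta>) = grading (- X (0, \<eta>))"
      using graded_conj_apply[of X "(0, \<eta>)"] S.adjointable_minus_apply[OF X, of "(0, \<eta>)"]
      by (simp add: odd grading_def)
    then show "e11 X \<eta> = 0" unfolding e11_def grading_def
      by (metis cvec_eq_minus_self snd_conv snd_uminus minus_minus)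
  qed
qed

text \<open>\<open>g\<close> solves the equation \<open>b g = -F\<close> for the Hochschild coboundary \<open>b\<close> of \<open>E\<^sub>L\<close>.\<close>

definition solution :: "('a \<Rightarrow> 'a \<Rightarrow> ('a, 'm) op) \<Rightarrow> ('a \<Rightarrow> ('a, 'm) op) \<Rightarrow> bool" where
  "solution F g \<longleftrightarrow> (\<forall>x. S.adjointable (g x)) \<and> clinearE g \<and>
     (\<forall>x y. g (x * y) = (tpi \<pi> x \<circ> g y) + (g x \<circ> tpi \<pi> y) + F x y)"

lemma solutionD:
  assumes "solution F g"
  shows "S.adjointable (g x)" and "clinearE g"
    and "g (x * y) = (tpi \<pi> x \<circ> g y) + (g x \<circ> tpi \<pi> y) + F x y"
  using assms unfolding solution_def by blast+

lemma solution_average: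
  assumes g1: "solution F g1" and g2: "solution F g2"
  shows "solution F (\<lambda>x. scC (1/2) (g1 x + g2 x))"
  unfolding solution_def
proof (intro conjI allI)
  fix x
  show "S.adjointable (scC (1/2) (g1 x + g2 x))"
    by (intro S.adjointable_scC S.adjointable_add solutionD[OF g1] solutionD[OF g2])
  show "clinearE (\<lambda>x. scC (1/2) (g1 x + g2 x))"
    using solutionD(2)[OF g1] solutionD(2)[OF g2]
    by (simp add: clinearE_iff scC_add_right scC_scC mult.commute algebra_simps)
next
  fix x y
  have "scC (1/2) (g1 (x * y) + g2 (x * y)) =
      scC (1/2) ((tpi \<pi> x \<circ> g1 y) + (tpi \<pi> x \<circ> g2 y)) + scC (1/2) ((g1 x \<circ> tpi \<pi> y) + (g2 x \<circ> tpi \<pi> y))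
        + scC (1/2) (F x y + F x y)"
    by (simp add: solutionD(3)[OF g1] solutionD(3)[OF g2] scC_add_right algebra_simps)
  then show "scC (1/2) (g1 (x * y) + g2 (x * y)) =
      (tpi \<pi> x \<circ> scC (1/2) (g1 y + g2 y)) + (scC (1/2) (g1 x + g2 x) \<circ> tpi \<pi> y) + F x y"
    by (simp add: S.comp_scC_right[OF tpi_adjointable] S.comp_add_right[OF tpi_adjointable]
        comp_scC_left comp_add_left scC_half_add_self)
qed

lemma solution_adjoint_star:
  assumes g: "solution F g" and F_adj: "\<And>x y. S.adjointable (F x y)"
    and F_star: "\<And>x y. S.adjoint (F (star y) (star x)) = F x y"
  shows "solution F (\<lambda>x. S.adjoint (g (star x)))"
  unfolding solution_def
proof (intro conjI allI)
  note g_adj = solutionD(1)[OF g] and g_lin = solutionD(2)[OF g]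
  show "S.adjointable (S.adjoint (g (star x)))" for x
    by (rule S.adjoint_adjointable[OF g_adj])
  show "clinearE (\<lambda>x. S.adjoint (g (star x)))"
    by (simp add: clinearE_iff star_add star_scC clinearE_add[OF g_lin] clinearE_scC[OF g_lin]
        S.adjoint_add S.adjoint_scC g_adj)
  fix x y
  have "S.adjoint (g (star (x * y))) = S.adjoint ((tpi \<pi> (star y) \<circ> g (star x))
      + (g (star y) \<circ> tpi \<pi> (star x)) + F (star y) (star x))"
    by (simp add: star_mult solutionD(3)[OF g])
  also have "\<dots> = (S.adjoint (g (star x)) \<circ> tpi \<pi> y) + (tpi \<pi> x \<circ> S.adjoint (g (star y))) + F x y"
    by (simp add: S.adjoint_add S.adjointable_add S.adjointable_comp tpi_adjointable g_adj F_adj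
        S.adjoint_comp tpi_adjoint star_star F_star)
  finally show "S.adjoint (g (star (x * y))) =
      (tpi \<pi> x \<circ> S.adjoint (g (star y))) + (S.adjoint (g (star x)) \<circ> tpi \<pi> y) + F x y"
    by (simp add: algebra_simps)
qed

lemma solution_graded_conj:
  assumes g: "solution F g" and F_parity: "\<And>x y. graded_conj (F x y) = neg_one_pow k (F x y)"
  shows "solution F (\<lambda>x. neg_one_pow k (graded_conj (g x)))"
  unfolding solution_def
proof (intro conjI allI)
  note g_adj = solutionD(1)[OF g] and g_lin = solutionD(2)[OF g]
  show "S.adjointable (neg_one_pow k (graded_conj (g x)))" for x
    using g_adj by (simp add: neg_one_pow_def graded_conj_adjointable S.adjointable_uminus)
  show "clinearE (\<lambda>x. neg_one_pow k (graded_conj (g x)))"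
    by (simp add: clinearE_iff clinearE_add[OF g_lin] clinearE_scC[OF g_lin] graded_conj_add
        graded_conj_scC neg_one_pow_add neg_one_pow_scC)
  show "neg_one_pow k (graded_conj (g (x * y))) = (tpi \<pi> x \<circ> neg_one_pow k (graded_conj (g y)))
      + (neg_one_pow k (graded_conj (g x)) \<circ> tpi \<pi> y) + F x y" for x y
    by (simp add: solutionD(3)[OF g] graded_conj_add graded_conj_comp graded_conj_tpi F_parity
        neg_one_pow_add neg_one_pow_neg_one_pow neg_one_pow_def
        comp_uminus_left S.comp_uminus_right[OF tpi_adjointable])
qed

lemma solution_add_corner:
  assumes g: "solution F g" and d_add: "\<And>x y. d (x + y) = d x + d y"
    and d_scC: "\<And>c x. d (scC c x) = scC c (d x)" and d_mult: "\<And>x y. d (x * y) = x * d y + d x * y"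
  shows "solution F (\<lambda>x. g x + corner (d x))"
  unfolding solution_def
proof (intro conjI allI)
  have corner_add: "corner (a + b) = corner a + corner b" for a b
    by (simp add: corner_def fun_eq_iff distrib_right)
  have corner_scC: "corner (scC c a) = scC c (corner a)" for c a
    by (simp add: corner_def fun_eq_iff scC_mult_left scC_prod_def)
  have tpi_corner: "tpi \<pi> x \<circ> corner a = corner (x * a)" for x a
    by (simp add: corner_def tpi_def fun_eq_iff mult.assoc pi_zero_apply)
  have corner_tpi: "corner a \<circ> tpi \<pi> y = corner (a * y)" for a y
    by (simp add: corner_def tpi_def fun_eq_iff mult.assoc)
  show "S.adjointable (g x + corner (d x))" for x
    by (intro S.adjointable_add solutionD(1)[OF g] corner_adjointable)
  show "clinearE (\<lambda>x. g x + corner (d x))"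
    using solutionD(2)[OF g]
    by (simp add: clinearE_iff d_add d_scC corner_add corner_scC scC_add_right algebra_simps)
  show "g (x * y) + corner (d (x * y)) =
      (tpi \<pi> x \<circ> (g y + corner (d y))) + ((g x + corner (d x)) \<circ> tpi \<pi> y) + F x y" for x y
    by (simp add: solutionD(3)[OF g] d_mult corner_add tpi_corner corner_tpi comp_add_left
        S.comp_add_right[OF tpi_adjointable] algebra_simps)
qed

end

section \<open>Truncated *-homomorphisms and their obstructions\<close>

lemma sum_atMost_Suc_split_ends:
  "(\<Sum>i\<le>Suc k. f i) = f 0 + (\<Sum>i\<in>{1..<Suc k}. f i) + (f (Suc k) :: 'b::comm_monoid_add)"
proof -
  have "{..Suc k} = insert 0 (insert (Suc k) {1..<Suc k})" and "0 \<notin> insert (Suc k) {1..<Suc k}" by auto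
  then show ?thesis by (simp add: add_ac)
qed

lemma sum_reflect_interior: "(\<Sum>i\<in>{1..<k}. f (k - i)) = (\<Sum>i\<in>{1..<(k::nat)}. (f i :: 'b::comm_monoid_add))"
  by (rule sum.reindex_bij_witness[where i = "\<lambda>i. k - i" and j = "\<lambda>i. k - i"]) auto

text \<open>Both sides sum \<open>w p q r\<close> over all \<open>p + q + r = k\<close>, grouped by \<open>p + q\<close> and by \<open>q + r\<close>.\<close>

lemma sum_triangle_regroup:
  fixes w :: "nat \<Rightarrow> nat \<Rightarrow> nat \<Rightarrow> 'b::comm_monoid_add"
  shows "(\<Sum>m\<le>k. \<Sum>i\<le>m. w i (m - i) (k - m)) = (\<Sum>m\<le>k. \<Sum>i\<le>m. w (k - m) i (m - i))"
proof -
  have "(\<Sum>m\<le>k. \<Sum>i\<le>m. w i (m - i) (k - m)) = (\<Sum>(i, j)\<in>{(i, j). i + j \<le> k}. w i j (k - i - j))"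
    by (subst sum.triangle_reindex_eq) (auto intro!: sum.cong)
  also have "\<dots> = (\<Sum>(i, j)\<in>{(i, j). i + j \<le> k}. w (k - i - j) i j)"
    by (rule sum.reindex_bij_witness[where i = "\<lambda>(q, r). (k - q - r, q)" and j = "\<lambda>(i, j). (j, k - i - j)"])
      auto
  also have "\<dots> = (\<Sum>m\<le>k. \<Sum>i\<le>m. w (k - m) i (m - i))"
    by (subst sum.triangle_reindex_eq) (auto intro!: sum.cong)
  finally show ?thesis .
qed

lemma interior_index_le: "i \<in> {1..<Suc n} \<Longrightarrow> i \<le> n \<and> Suc n - i \<le> n"
  by auto

context canonical_data
begin

lemma neg_one_pow_comp:
  "S.adjointable X \<Longrightarrow> neg_one_pow i X \<circ> neg_one_pow j Y = neg_one_pow (i + j) (X \<circ> Y)"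
  by (simp add: neg_one_pow_def comp_uminus_left S.comp_uminus_right)

text \<open>\<open>B k\<close> is the coefficient of \<open>t\<^sup>k\<close> of a *-homomorphism modulo \<open>t\<^sup>k\<^sup>+\<^sup>1\<close>, of parity \<open>k\<close>.\<close>

definition deformation_coeff :: "(nat \<Rightarrow> 'a \<Rightarrow> ('a, 'm) op) \<Rightarrow> nat \<Rightarrow> bool" where
  "deformation_coeff B k \<longleftrightarrow> (\<forall>x. S.adjointable (B k x)) \<and> clinearE (B k) \<and>
     (\<forall>x y. B k (x * y) = (\<Sum>i\<le>k. B i x \<circ> B (k - i) y)) \<and>
     (\<forall>x. B k (star x) = S.adjoint (B k x)) \<and>
     (\<forall>x. graded_conj (B k x) = neg_one_pow k (B k x))"

definition deformation :: "nat \<Rightarrow> (nat \<Rightarrow> 'a \<Rightarrow> ('a, 'm) op) \<Rightarrow> bool" where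
  "deformation n B \<longleftrightarrow> (\<forall>k\<le>n. deformation_coeff B k) \<and> B 0 = tpi \<pi> \<and> B 1 = delta_mat \<and>
     (2 \<le> n \<longrightarrow> (\<forall>x. e00 (B 2 x) = L x))"

lemma deformationD:
  assumes "deformation n B" and "k \<le> n"
  shows "S.adjointable (B k x)" and "clinearE (B k)"
    and "B k (x * y) = (\<Sum>i\<le>k. B i x \<circ> B (k - i) y)"
    and "B k (star x) = S.adjoint (B k x)"
    and "graded_conj (B k x) = neg_one_pow k (B k x)"
  using assms unfolding deformation_def deformation_coeff_def by blast+

lemma deformation_0: "deformation n B \<Longrightarrow> B 0 = tpi \<pi>"
  and deformation_1: "deformation n B \<Longrightarrow> B 1 = delta_mat"
  and deformation_2: "deformation n B \<Longrightarrow> 2 \<le> n \<Longrightarrow> e00 (B 2 x) = L x"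
  unfolding deformation_def by blast+

lemma deformation_coeff_cong:
  assumes "\<And>j. j \<le> k \<Longrightarrow> B' j = B j"
  shows "deformation_coeff B' k = deformation_coeff B k"
proof -
  have "(\<Sum>i\<le>k. B' i x \<circ> B' (k - i) y) = (\<Sum>i\<le>k. B i x \<circ> B (k - i) y)" for x y
    using assms by (intro sum.cong) auto
  then show ?thesis unfolding deformation_coeff_def using assms[of k] by simp
qed

lemma deformation_cong:
  assumes B: "deformation n B" and n: "1 \<le> n" and eq: "\<And>j. j \<le> n \<Longrightarrow> B' j = B j"
  shows "deformation n B'"
proof -
  have "deformation_coeff B' k" if "k \<le> n" for k
    using B that eq deformation_coeff_cong[of k B' B] unfolding deformation_def by simp
  then show ?thesis using B n eq[of 0] eq[of 1] eq[of 2] unfolding deformation_def by auto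
qed

lemma deformation_base: "deformation 1 (\<lambda>k. if k = 0 then tpi \<pi> else delta_mat)"
proof -
  have "{..Suc 0} = {0, 1}" by auto
  then show ?thesis
    by (auto simp: deformation_def deformation_coeff_def le_Suc_eq neg_one_pow_def
        tpi_adjointable clinearE_tpi tpi_mult tpi_adjoint graded_conj_tpi
        delta_mat_adjointable clinearE_delta_mat delta_mat_mult delta_mat_adjoint graded_conj_delta_mat)
qed

definition obstruction :: "(nat \<Rightarrow> 'a \<Rightarrow> ('a, 'm) op) \<Rightarrow> nat \<Rightarrow> 'a \<Rightarrow> 'a \<Rightarrow> ('a, 'm) op" where
  "obstruction B k x y = (\<Sum>i\<in>{1..<k}. B i x \<circ> B (k - i) y)"

lemma obstruction_adjointable:
  "deformation n B \<Longrightarrow> S.adjointable (obstruction B (Suc n) x y)"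
  unfolding obstruction_def
  by (intro S.adjointable_sum S.adjointable_comp) (auto dest!: interior_index_le intro: deformationD(1))

lemma clinearE_obstruction_left:
  assumes B: "deformation n B" shows "clinearE (\<lambda>x. obstruction B (Suc n) x y)"
proof -
  note lin = clinearE_add[OF deformationD(2)[OF B]] clinearE_scC[OF deformationD(2)[OF B]]
  have "obstruction B (Suc n) (x + x') y = obstruction B (Suc n) x y + obstruction B (Suc n) x' y" for x x'
    unfolding obstruction_def sum.distrib[symmetric]
    by (intro sum.cong refl) (auto dest!: interior_index_le simp: lin comp_add_left)
  moreover have "obstruction B (Suc n) (scC c x) y = scC c (obstruction B (Suc n) x y)" for c x
    unfolding obstruction_def scC_sum_right
    by (intro sum.cong refl) (auto dest!: interior_index_le simp: lin comp_scC_left)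
  ultimately show ?thesis by (simp add: clinearE_iff)
qed

lemma clinearE_obstruction_right:
  assumes B: "deformation n B" shows "clinearE (obstruction B (Suc n) x)"
proof -
  note lin = clinearE_add[OF deformationD(2)[OF B]] clinearE_scC[OF deformationD(2)[OF B]]
    and comp = S.comp_add_right[OF deformationD(1)[OF B]] S.comp_scC_right[OF deformationD(1)[OF B]]
  have "obstruction B (Suc n) x (y + y') = obstruction B (Suc n) x y + obstruction B (Suc n) x y'" for y y'
    unfolding obstruction_def sum.distrib[symmetric]
    by (intro sum.cong refl) (auto dest!: interior_index_le simp: lin comp)
  moreover have "obstruction B (Suc n) x (scC c y) = scC c (obstruction B (Suc n) x y)" for c y
    unfolding obstruction_def scC_sum_right
    by (intro sum.cong refl) (auto dest!: interior_index_le simp: lin comp)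
  ultimately show ?thesis by (simp add: clinearE_iff)
qed

lemma obstruction_adjoint_star:
  assumes B: "deformation n B"
  shows "S.adjoint (obstruction B (Suc n) (star y) (star x)) = obstruction B (Suc n) x y"
proof -
  have "S.adjoint (obstruction B (Suc n) (star y) (star x)) =
      (\<Sum>i\<in>{1..<Suc n}. S.adjoint (B i (star y) \<circ> B (Suc n - i) (star x)))"
    unfolding obstruction_def
    by (rule S.adjoint_sum) (auto intro!: S.adjointable_comp deformationD(1)[OF B])
  also have "\<dots> = (\<Sum>i\<in>{1..<Suc n}. B (Suc n - i) x \<circ> B i y)"
    by (intro sum.cong refl) (auto dest!: interior_index_le simp: S.adjoint_comp
        deformationD(1,4)[OF B] S.adjoint_adjointable S.adjoint_adjoint)
  also have "\<dots> = obstruction B (Suc n) x y"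
    unfolding obstruction_def
    by (subst sum_reflect_interior[symmetric]) (auto intro!: sum.cong)
  finally show ?thesis .
qed

lemma obstruction_parity:
  assumes B: "deformation n B"
  shows "graded_conj (obstruction B (Suc n) x y) = neg_one_pow (Suc n) (obstruction B (Suc n) x y)"
  unfolding obstruction_def graded_conj_sum neg_one_pow_sum
proof (intro sum.cong refl)
  fix i assume "i \<in> {1..<Suc n}"
  then have i: "i \<le> n" "Suc n - i \<le> n" "i + (Suc n - i) = Suc n" by auto
  show "graded_conj (B i x \<circ> B (Suc n - i) y) = neg_one_pow (Suc n) (B i x \<circ> B (Suc n - i) y)"
    unfolding graded_conj_comp deformationD(5)[OF B i(1)] deformationD(5)[OF B i(2)]
    by (simp add: neg_one_pow_comp[OF deformationD(1)[OF B i(1)]] i(3))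
qed

lemma obstruction_2: "deformation 1 B \<Longrightarrow> obstruction B 2 x y = delta_mat x \<circ> delta_mat y"
proof -
  have "{1..<2::nat} = {1}" by auto
  then show "deformation 1 B \<Longrightarrow> ?thesis" by (simp add: obstruction_def deformation_1[unfolded One_nat_def])
qed

text \<open>Summed over \<open>p + q + r = k\<close>, these products make up both sides of the cocycle identity.\<close>

definition triple_prod :: "(nat \<Rightarrow> 'a \<Rightarrow> ('a, 'm) op) \<Rightarrow> nat \<Rightarrow> 'a \<Rightarrow> 'a \<Rightarrow> 'a \<Rightarrow> nat \<Rightarrow> nat \<Rightarrow> nat \<Rightarrow> ('a, 'm) op"
  where "triple_prod B k a b c p q r = (if p < k \<and> q < k \<and> r < k then B p a \<circ> B q b \<circ> B r c else 0)"

lemma triple_prod_sum_left: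
  fixes a b c :: 'a
  assumes B: "deformation n B"
  defines "W \<equiv> triple_prod B (Suc n) a b c"
  shows "(\<Sum>m\<le>Suc n. \<Sum>i\<le>m. W i (m - i) (Suc n - m))
    = obstruction B (Suc n) (a * b) c + (obstruction B (Suc n) a b \<circ> tpi \<pi> c)"
proof -
  have inner: "(\<Sum>i\<le>m. W i (m - i) (Suc n - m)) = B m (a * b) \<circ> B (Suc n - m) c"
    if m: "m \<in> {1..<Suc n}" for m
  proof -
    have "(\<Sum>i\<le>m. W i (m - i) (Suc n - m)) = (\<Sum>i\<le>m. B i a \<circ> B (m - i) b) \<circ> B (Suc n - m) c"
    proof -
      have "i \<le> m \<Longrightarrow> i < Suc n \<and> m - i < Suc n \<and> Suc n - m < Suc n" for i using m by auto
      then have "(\<Sum>i\<le>m. W i (m - i) (Suc n - m)) = (\<Sum>i\<le>m. B i a \<circ> B (m - i) b \<circ> B (Suc n - m) c)"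
        by (intro sum.cong) (simp_all add: W_def triple_prod_def)
      then show ?thesis by (simp add: sum_comp_right)
    qed
    then show ?thesis using m by (simp add: deformationD(3)[OF B])
  qed
  have last: "(\<Sum>i\<le>Suc n. W i (Suc n - i) 0) = obstruction B (Suc n) a b \<circ> tpi \<pi> c"
  proof -
    have "(\<Sum>i\<le>Suc n. W i (Suc n - i) 0)
        = W 0 (Suc n) 0 + (\<Sum>i\<in>{1..<Suc n}. W i (Suc n - i) 0) + W (Suc n) 0 0"
      using sum_atMost_Suc_split_ends[of "\<lambda>i. W i (Suc n - i) 0"] by simp
    also have "\<dots> = (\<Sum>i\<in>{1..<Suc n}. B i a \<circ> B (Suc n - i) b \<circ> B 0 c)"
      by (auto simp: W_def triple_prod_def intro!: sum.cong)
    also have "\<dots> = (\<Sum>i\<in>{1..<Suc n}. B i a \<circ> B (Suc n - i) b) \<circ> tpi \<pi> c"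
      by (simp only: sum_comp_right deformation_0[OF B])
    finally show ?thesis by (simp only: obstruction_def)
  qed
  have "(\<Sum>m\<le>Suc n. \<Sum>i\<le>m. W i (m - i) (Suc n - m))
      = (\<Sum>i\<le>0. W i (0 - i) (Suc n)) + (\<Sum>m\<in>{1..<Suc n}. \<Sum>i\<le>m. W i (m - i) (Suc n - m))
        + (\<Sum>i\<le>Suc n. W i (Suc n - i) 0)"
    using sum_atMost_Suc_split_ends[of "\<lambda>m. \<Sum>i\<le>m. W i (m - i) (Suc n - m)"]
    by (simp only: diff_zero diff_self_eq_0)
  also have "(\<Sum>i\<le>0. W i (0 - i) (Suc n)) = 0" by (simp add: W_def triple_prod_def)
  also have "(\<Sum>m\<in>{1..<Suc n}. \<Sum>i\<le>m. W i (m - i) (Suc n - m)) = obstruction B (Suc n) (a * b) c"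
    unfolding obstruction_def by (rule sum.cong) (simp_all add: inner)
  finally show ?thesis by (simp only: last add_0_left)
qed

lemma triple_prod_sum_right:
  fixes a b c :: 'a
  assumes B: "deformation n B"
  defines "W \<equiv> triple_prod B (Suc n) a b c"
  shows "(\<Sum>m\<le>Suc n. \<Sum>i\<le>m. W (Suc n - m) i (m - i))
    = obstruction B (Suc n) a (b * c) + (tpi \<pi> a \<circ> obstruction B (Suc n) b c)"
proof -
  have inner: "(\<Sum>i\<le>m. W (Suc n - m) i (m - i)) = B (Suc n - m) a \<circ> B m (b * c)"
    if m: "m \<in> {1..<Suc n}" for m
  proof -
    have "(\<Sum>i\<le>m. W (Suc n - m) i (m - i)) = B (Suc n - m) a \<circ> (\<Sum>i\<le>m. B i b \<circ> B (m - i) c)"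
    proof -
      have "i \<le> m \<Longrightarrow> i < Suc n \<and> m - i < Suc n \<and> Suc n - m < Suc n" for i using m by auto
      then have "(\<Sum>i\<le>m. W (Suc n - m) i (m - i)) = (\<Sum>i\<le>m. B (Suc n - m) a \<circ> (B i b \<circ> B (m - i) c))"
        by (intro sum.cong) (simp_all add: W_def triple_prod_def comp_assoc)
      moreover have "Suc n - m \<le> n" using m by auto
      ultimately show ?thesis by (simp add: S.comp_sum_right[OF deformationD(1)[OF B]])
    qed
    then show ?thesis using m by (simp add: deformationD(3)[OF B])
  qed
  have last: "(\<Sum>i\<le>Suc n. W 0 i (Suc n - i)) = tpi \<pi> a \<circ> obstruction B (Suc n) b c"
  proof -
    have "(\<Sum>i\<le>Suc n. W 0 i (Suc n - i))
        = W 0 0 (Suc n) + (\<Sum>i\<in>{1..<Suc n}. W 0 i (Suc n - i)) + W 0 (Suc n) 0"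
      using sum_atMost_Suc_split_ends[of "\<lambda>i. W 0 i (Suc n - i)"] by simp
    also have "\<dots> = (\<Sum>i\<in>{1..<Suc n}. tpi \<pi> a \<circ> (B i b \<circ> B (Suc n - i) c))"
      by (auto simp: W_def triple_prod_def comp_assoc deformation_0[OF B] intro!: sum.cong)
    finally show ?thesis
      by (simp only: obstruction_def S.comp_sum_right[OF tpi_adjointable])
  qed
  have "(\<Sum>m\<le>Suc n. \<Sum>i\<le>m. W (Suc n - m) i (m - i))
      = (\<Sum>i\<le>0. W (Suc n) i (0 - i)) + (\<Sum>m\<in>{1..<Suc n}. \<Sum>i\<le>m. W (Suc n - m) i (m - i))
        + (\<Sum>i\<le>Suc n. W 0 i (Suc n - i))"
    using sum_atMost_Suc_split_ends[of "\<lambda>m. \<Sum>i\<le>m. W (Suc n - m) i (m - i)"]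
    by (simp only: diff_zero diff_self_eq_0)
  also have "(\<Sum>i\<le>0. W (Suc n) i (0 - i)) = 0" by (simp add: W_def triple_prod_def)
  also have "(\<Sum>m\<in>{1..<Suc n}. \<Sum>i\<le>m. W (Suc n - m) i (m - i))
      = (\<Sum>m\<in>{1..<Suc n}. B (Suc n - m) a \<circ> B m (b * c))"
    by (rule sum.cong) (simp_all add: inner)
  also have "(\<Sum>m\<in>{1..<Suc n}. B (Suc n - m) a \<circ> B m (b * c)) = obstruction B (Suc n) a (b * c)"
    unfolding obstruction_def by (subst sum_reflect_interior[symmetric]) (auto intro!: sum.cong)
  finally show ?thesis by (simp only: last add_0_left)
qed

lemma obstruction_cocycle:
  assumes "deformation n B"
  shows "hoch_b2 \<pi> (\<lambda>x y. - obstruction B (Suc n) x y) a b c = ezero"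
proof -
  have "obstruction B (Suc n) (a * b) c + (obstruction B (Suc n) a b \<circ> tpi \<pi> c)
      = obstruction B (Suc n) a (b * c) + (tpi \<pi> a \<circ> obstruction B (Suc n) b c)"
    unfolding triple_prod_sum_left[OF assms, symmetric] triple_prod_sum_right[OF assms, symmetric]
    by (rule sum_triangle_regroup)
  then show ?thesis
    unfolding hoch_b2_def ediff_eq eadd_eq ezero_eq lact_def ract_E_def
    by (simp add: S.comp_uminus_right[OF tpi_adjointable] comp_uminus_left algebra_simps)
qed

end

section \<open>Extending a truncated *-homomorphism by one order\<close>

context canonical_data
begin

lemma solution_exists:
  assumes B: "deformation n B"
  shows "\<exists>g. solution (obstruction B (Suc n)) g"
proof -
  let ?f = "\<lambda>x y. - obstruction B (Suc n) x y"
  have "(\<forall>x y. ?f x y \<in> EL ip) \<and> (\<forall>y. clinearE (\<lambda>x. ?f x y)) \<and> (\<forall>x. clinearE (?f x)) \<and>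
      (\<forall>x y z. hoch_b2 \<pi> ?f x y z = ezero)"
  proof (intro conjI allI)
    show "?f x y \<in> EL ip" for x y
      by (simp add: EL_iff_adjointable S.adjointable_uminus obstruction_adjointable[OF B])
    show "clinearE (\<lambda>x. ?f x y)" for y
      using clinearE_obstruction_left[OF B] by (simp add: clinearE_iff scC_minus_right)
    show "clinearE (?f x)" for x
      using clinearE_obstruction_right[OF B] by (simp add: clinearE_iff scC_minus_right)
    show "hoch_b2 \<pi> ?f x y z = ezero" for x y z
      by (rule obstruction_cocycle[OF B])
  qed
  then obtain g where g_EL: "\<And>x. g x \<in> EL ip" and g_lin: "clinearE g"
    and g_cobound: "\<And>x y. ?f x y = hoch_b1 \<pi> g x y"
    using H2[unfolded H2_vanishes_def, rule_format, of ?f] by blast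
  have "g (x * y) = (tpi \<pi> x \<circ> g y) + (g x \<circ> tpi \<pi> y) + obstruction B (Suc n) x y" for x y
    using g_cobound[of x y] unfolding hoch_b1_def eadd_eq ediff_eq lact_def ract_E_def
    by (simp add: algebra_simps eq_neg_iff_add_eq_0)
  then show ?thesis
    using g_EL g_lin unfolding solution_def EL_iff_adjointable by blast
qed

text \<open>At order 2 the \<open>(0,0)\<close> entry of a solution differs from \<open>L\<close> by a derivation of \<open>\<A>\<close>.\<close>

lemma solution_with_corner_L:
  assumes g: "solution F g" and F: "\<And>x y. e00 (F x y) = ip (\<delta> (star x)) (\<delta> y)"
  shows "\<exists>g'. solution F g' \<and> (\<forall>x. e00 (g' x) = L x)"
proof -
  define d where "d x = L x - e00 (g x)" for x
  note g_lin = solutionD(2)[OF g]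
  have "solution F (\<lambda>x. g x + corner (d x))"
  proof (rule solution_add_corner[OF g])
    show "d (x + y) = d x + d y" for x y
      by (simp add: d_def L_add clinearE_add[OF g_lin] e00_add algebra_simps)
    show "d (scC c x) = scC c (d x)" for c x
      by (simp add: d_def L_scC clinearE_scC[OF g_lin] e00_scC scC_diff_right)
    show "d (x * y) = x * d y + d x * y" for x y
    proof -
      have "e00 (g (x * y)) = x * e00 (g y) + e00 (g x) * y + ip (\<delta> (star x)) (\<delta> y)"
        by (simp add: solutionD(3)[OF g] e00_add e00_tpi_comp e00_comp_tpi solutionD(1)[OF g] F)
      moreover have "L (x * y) = x * L y + L x * y + ip (\<delta> (star x)) (\<delta> y)"
        using L_mult[of x y] by (simp add: algebra_simps)
      ultimately show ?thesis by (simp add: d_def algebra_simps)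
    qed
  qed
  moreover have "e00 (g x + corner (d x)) = L x" for x
    by (simp add: d_def e00_add e00_corner)
  ultimately show ?thesis by blast
qed

definition star_symmetrization :: "('a \<Rightarrow> ('a, 'm) op) \<Rightarrow> 'a \<Rightarrow> ('a, 'm) op" where
  "star_symmetrization g x = scC (1/2) (g x + S.adjoint (g (star x)))"

lemma solution_star_symmetrization:
  assumes "solution F g" "\<And>x y. S.adjointable (F x y)" "\<And>x y. S.adjoint (F (star y) (star x)) = F x y"
  shows "solution F (star_symmetrization g)"
  unfolding star_symmetrization_def[abs_def]
  using solution_average[OF assms(1) solution_adjoint_star[OF assms]] .

lemma star_symmetrization_star:
  assumes g: "\<And>x. S.adjointable (g x)"
  shows "star_symmetrization g (star x) = S.adjoint (star_symmetrization g x)"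
  by (simp add: star_symmetrization_def star_star S.adjoint_scC S.adjointable_add g
      S.adjoint_adjointable S.adjoint_add S.adjoint_adjoint add.commute)

lemma e00_star_symmetrization:
  assumes g: "\<And>x. S.adjointable (g x)" and e: "\<And>x. e00 (g x) = L x"
  shows "e00 (star_symmetrization g x) = L x"
  by (simp add: star_symmetrization_def e00_scC e00_add e00_adjoint[OF g] e L_star star_star
      scC_half_add_self)

definition parity_projection :: "nat \<Rightarrow> ('a \<Rightarrow> ('a, 'm) op) \<Rightarrow> 'a \<Rightarrow> ('a, 'm) op" where
  "parity_projection k g x = scC (1/2) (g x + neg_one_pow k (graded_conj (g x)))"

lemma solution_parity_projection:
  assumes "solution F g" "\<And>x y. graded_conj (F x y) = neg_one_pow k (F x y)"
  shows "solution F (parity_projection k g)"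
  unfolding parity_projection_def[abs_def]
  using solution_average[OF assms(1) solution_graded_conj[OF assms]] .

lemma parity_projection_parity:
  "graded_conj (parity_projection k g x) = neg_one_pow k (parity_projection k g x)"
  by (simp add: parity_projection_def graded_conj_scC graded_conj_add graded_conj_neg_one_pow
      graded_conj_graded_conj neg_one_pow_scC neg_one_pow_add neg_one_pow_neg_one_pow add.commute)

lemma parity_projection_star:
  assumes g: "\<And>x. S.adjointable (g x)" and g_star: "\<And>x. g (star x) = S.adjoint (g x)"
  shows "parity_projection k g (star x) = S.adjoint (parity_projection k g x)"
  using g by (simp add: parity_projection_def g_star S.adjoint_scC S.adjointable_add S.adjoint_add
      neg_one_pow_def S.adjointable_uminus S.adjoint_uminus graded_conj_adjointable graded_conj_adjoint)

lemma e00_parity_projection: "even k \<Longrightarrow> e00 (parity_projection k g x) = e00 (g x)"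
  by (simp add: parity_projection_def neg_one_pow_def e00_scC e00_add e00_graded_conj scC_half_add_self)

lemma deformation_update:
  assumes B: "deformation n B" and n: "1 \<le> n"
    and g: "solution (obstruction B (Suc n)) g"
    and g_star: "\<And>x. g (star x) = S.adjoint (g x)"
    and g_parity: "\<And>x. graded_conj (g x) = neg_one_pow (Suc n) (g x)"
    and g_L: "\<And>x. n = 1 \<Longrightarrow> e00 (g x) = L x"
  shows "deformation (Suc n) (B(Suc n := g))"
proof -
  let ?B = "B(Suc n := g)"
  have B': "deformation n ?B" by (rule deformation_cong[OF B n]) simp
  have "?B (Suc n) (x * y) = (\<Sum>i\<le>Suc n. ?B i x \<circ> ?B (Suc n - i) y)" for x y
  proof -
    have "(\<Sum>i\<le>Suc n. ?B i x \<circ> ?B (Suc n - i) y)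
        = (?B 0 x \<circ> ?B (Suc n) y) + (\<Sum>i\<in>{1..<Suc n}. ?B i x \<circ> ?B (Suc n - i) y) + (?B (Suc n) x \<circ> ?B 0 y)"
      using sum_atMost_Suc_split_ends[of "\<lambda>i. ?B i x \<circ> ?B (Suc n - i) y" n]
      by (simp only: diff_zero diff_self_eq_0)
    also have "(\<Sum>i\<in>{1..<Suc n}. ?B i x \<circ> ?B (Suc n - i) y) = obstruction B (Suc n) x y"
      unfolding obstruction_def by (rule sum.cong) auto
    also have "?B 0 = tpi \<pi>" using deformation_0[OF B] by simp
    also have "?B (Suc n) = g" by simp
    also have "(tpi \<pi> x \<circ> g y) + obstruction B (Suc n) x y + (g x \<circ> tpi \<pi> y) = g (x * y)"
      by (simp only: solutionD(3)[OF g] add_ac)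
    finally show ?thesis by (simp only: fun_upd_same)
  qed
  then have "deformation_coeff ?B (Suc n)"
    unfolding deformation_coeff_def using solutionD(1,2)[OF g] g_star g_parity by simp
  moreover have "e00 (?B 2 x) = L x" if "2 \<le> Suc n" for x
    using that g_L deformation_2[OF B] by (cases "n = 1") auto
  ultimately show ?thesis
    using B' unfolding deformation_def by (auto simp: le_Suc_eq)
qed

lemma deformation_extend:
  assumes B: "deformation n B" and n: "1 \<le> n"
  shows "\<exists>g. deformation (Suc n) (B(Suc n := g))"
proof -
  let ?F = "obstruction B (Suc n)"
  obtain g0 where g0: "solution ?F g0" using solution_exists[OF B] ..
  obtain g where g: "solution ?F g" and g_L: "n = 1 \<Longrightarrow> \<forall>x. e00 (g x) = L x"
  proof (cases "n = 1")
    case True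
    have "e00 (?F x y) = ip (\<delta> (star x)) (\<delta> y)" for x y
      using obstruction_2[of B x y] B True by (simp add: numeral_2_eq_2 e00_delta_mat_comp)
    with solution_with_corner_L[OF g0] obtain g where "solution ?F g" "\<forall>x. e00 (g x) = L x"
      by blast
    then show ?thesis by (rule that)
  qed (use that g0 in blast)
  define g' where "g' = parity_projection (Suc n) (star_symmetrization g)"
  have F_adj: "S.adjointable (?F x y)" for x y by (rule obstruction_adjointable[OF B])
  have g_sym: "solution ?F (star_symmetrization g)"
    by (rule solution_star_symmetrization[OF g F_adj obstruction_adjoint_star[OF B]])
  have "deformation (Suc n) (B(Suc n := g'))"
  proof (rule deformation_update[OF B n])
    show "solution ?F g'"
      unfolding g'_def by (rule solution_parity_projection[OF g_sym obstruction_parity[OF B]])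
    have "star_symmetrization g (star x) = S.adjoint (star_symmetrization g x)" for x
      using solutionD(1)[OF g] by (rule star_symmetrization_star)
    then show "g' (star x) = S.adjoint (g' x)" for x
      unfolding g'_def by (rule parity_projection_star[OF solutionD(1)[OF g_sym]])
    show "graded_conj (g' x) = neg_one_pow (Suc n) (g' x)" for x
      unfolding g'_def by (rule parity_projection_parity)
    show "e00 (g' x) = L x" if "n = 1" for x
      using that g_L e00_star_symmetrization[OF solutionD(1)[OF g]]
      by (simp add: g'_def e00_parity_projection)
  qed
  then show ?thesis by blast
qed

end

lemma diagonal_eq_if_coherent:
  assumes "\<And>n j. j \<le> Suc n \<Longrightarrow> f (Suc n) j = f n j" and "j \<le> Suc m"
  shows "f m j = f j j"
  using assms(2)
proof (induction m arbitrary: j)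
  case 0
  then show ?case using assms(1)[of j 0] by (cases j) auto
next
  case (Suc m)
  then show ?case using assms(1)[of j m] assms(1)[of j "Suc m"] by (cases "j = Suc (Suc m)") auto
qed

context canonical_data
begin

lemma deformation_exists: "\<exists>B. \<forall>n. deformation (Suc n) B"
proof -
  have "\<exists>f. \<forall>n. deformation (Suc n) (f n) \<and> (\<forall>j\<le>Suc n. f (Suc n) j = f n j)"
  proof (rule dependent_nat_choice)
    show "\<exists>B. deformation (Suc 0) B" using deformation_base by (auto simp: One_nat_def)
    show "\<exists>B'. deformation (Suc (Suc n)) B' \<and> (\<forall>j\<le>Suc n. B' j = B j)" if B: "deformation (Suc n) B" for B n
    proof -
      have "1 \<le> Suc n" by simp
      then obtain g where "deformation (Suc (Suc n)) (B(Suc (Suc n) := g))"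
        using deformation_extend[OF B] by blast
      then show ?thesis by (intro exI[of _ "B(Suc (Suc n) := g)"]) simp
    qed
  qed
  then obtain f where f: "\<And>n. deformation (Suc n) (f n)"
    and coherent: "\<And>n j. j \<le> Suc n \<Longrightarrow> f (Suc n) j = f n j"
    by blast
  have "deformation (Suc m) (\<lambda>j. f j j)" for m
  proof (rule deformation_cong[OF f])
    show "(\<lambda>j. f j j) j = f m j" if "j \<le> Suc m" for j
      using diagonal_eq_if_coherent[where f = f, OF coherent that] by simp
  qed simp
  then show ?thesis by blast
qed

end

section \<open>The matrix entries of the deformation\<close>

context canonical_data
begin

lemma star_hom_series_exists:
  "\<exists>(\<beta> :: 'a \<Rightarrow> nat \<Rightarrow> ('a, 'm) op)
      (\<theta>00 :: nat \<Rightarrow> 'a \<Rightarrow> 'a) (\<theta>10 :: nat \<Rightarrow> 'a \<Rightarrow> 'm)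
      (\<theta>01 :: nat \<Rightarrow> 'a \<Rightarrow> 'm \<Rightarrow> 'a) (\<theta>11 :: nat \<Rightarrow> 'a \<Rightarrow> 'm \<Rightarrow> 'm).
     (\<forall>x k. \<beta> x k \<in> EL ip) \<and>
     (\<forall>x y. \<beta> (x * y) = ps_mult (\<beta> x) (\<beta> y)) \<and>
     (\<forall>x. \<beta> (star x) = ps_star ip (\<beta> x)) \<and>
     (\<forall>n. clinear (\<theta>00 n) \<and> clinear (\<theta>10 n) \<and> clinear_fun (\<theta>01 n) \<and> clinear_fun (\<theta>11 n)) \<and>
     (\<forall>x n. e00 (\<beta> x (2 * n)) = \<theta>00 n x \<and> e00 (\<beta> x (2 * n + 1)) = 0) \<and>
     (\<forall>x n. e10 (\<beta> x (2 * n + 1)) = \<theta>10 (n + 1) x \<and> e10 (\<beta> x (2 * n)) = 0) \<and>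
     (\<forall>x n. e01 (\<beta> x (2 * n + 1)) = \<theta>01 (n + 1) x \<and> e01 (\<beta> x (2 * n)) = (\<lambda>_. 0)) \<and>
     (\<forall>x n. e11 (\<beta> x (2 * n)) = \<theta>11 (n + 1) x \<and> e11 (\<beta> x (2 * n + 1)) = (\<lambda>_. 0)) \<and>
     (\<forall>x. \<theta>00 0 x = x) \<and> \<theta>00 1 = L \<and> \<theta>10 1 = \<delta> \<and>
     (\<forall>x. \<theta>01 1 x = (\<lambda>\<eta>. ip (\<delta> (star x)) \<eta>)) \<and> \<theta>11 1 = \<pi>"
proof -
  obtain B where B: "\<And>n. deformation (Suc n) B" using deformation_exists by blast
  have adj: "S.adjointable (B k x)" and lin: "clinearE (B k)"
    and mult: "B k (x * y) = (\<Sum>i\<le>k. B i x \<circ> B (k - i) y)"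
    and star: "B k (star x) = S.adjoint (B k x)"
    and parity: "graded_conj (B k x) = neg_one_pow k (B k x)" for k x y
    using deformationD[OF B[of k]] by simp_all
  have even: "graded_conj (B (2 * n) x) = B (2 * n) x"
    and odd: "graded_conj (B (2 * n + 1) x) = - B (2 * n + 1) x" for n x
    using parity[of "2 * n"] parity[of "2 * n + 1"] by (simp_all add: neg_one_pow_def)
  note entries_lin = clinearE_add[OF lin] clinearE_scC[OF lin] e00_add e00_scC e10_add e10_scC
    e01_add e01_scC e11_add e11_scC
  show ?thesis
  proof (intro exI conjI allI)
    show "(\<lambda>x k. B k x) x k \<in> EL ip" for x k by (simp add: EL_iff_adjointable adj)
    show "(\<lambda>x k. B k x) (x * y) = ps_mult ((\<lambda>x k. B k x) x) ((\<lambda>x k. B k x) y)" for x y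
      by (simp add: ps_mult_def fun_eq_iff prod_eq_iff mult sum_fun_apply fst_sum snd_sum)
    show "(\<lambda>x k. B k x) (star x) = ps_star ip ((\<lambda>x k. B k x) x)" for x
      by (simp add: ps_star_def adjE_eq_adjoint fun_eq_iff star)
    show "clinear (\<lambda>x. e00 (B (2 * n) x))" "clinear (\<lambda>x. e10 (B (2 * n - 1) x))"
      "clinear_fun (\<lambda>x. e01 (B (2 * n - 1) x))" "clinear_fun (\<lambda>x. e11 (B (2 * n - 2) x))" for n
      by (simp_all add: clinear_def clinear_fun_def entries_lin)
    show "e00 (B (2 * n + 1) x) = 0" "e11 (B (2 * n + 1) x) = (\<lambda>_. 0)" for n x
      using odd_diagonal_zero[OF adj odd] by simp_all
    show "e10 (B (2 * n) x) = 0" "e01 (B (2 * n) x) = (\<lambda>_. 0)" for n x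
      using even_off_diagonal_zero[OF adj even] by simp_all
    show "e00 (B (2 * 0) x) = x" for x
      using deformation_0[OF B[of 0]] by (simp add: e00_def tpi_def)
    show "(\<lambda>x. e00 (B (2 * 1) x)) = L"
      using deformation_2[OF B[of 1]] by (simp add: fun_eq_iff)
    show "(\<lambda>x. e10 (B (2 * 1 - 1) x)) = \<delta>" "(\<lambda>x. e01 (B (2 * 1 - 1) x)) x = ip (\<delta> (star x))" for x
      using deformation_1[OF B[of 0]] by (simp_all add: fun_eq_iff e10_def e01_def delta_mat_def ract_one)
    show "(\<lambda>x. e11 (B (2 * 1 - 2) x)) = \<pi>"
      using deformation_0[OF B[of 0]] by (simp add: fun_eq_iff e11_def tpi_def)
  qed simp_all
qed

end

theorem theorem3p1:
  fixes rep :: "'a::star_alg \<Rightarrow> 'h::chilbert \<Rightarrow> 'h"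
    and L :: "'a \<Rightarrow> 'a"
    and ract :: "'m::cvec \<Rightarrow> 'a \<Rightarrow> 'm"
    and ip :: "'m \<Rightarrow> 'm \<Rightarrow> 'a"
    and \<pi> :: "'a \<Rightarrow> 'm \<Rightarrow> 'm"
    and \<delta> :: "'a \<Rightarrow> 'm"
  assumes A: "unital_star_subalg_of_Bh rep"
    and L_lin: "clinear L"
    and L_ccp: "ccp rep L"
    and L_one: "L 1 = 0"
    and canon: "canonical_triple rep L ract ip \<pi> \<delta>"
    and H2: "H2_vanishes ip \<pi>"
  shows "\<exists>(\<beta> :: 'a \<Rightarrow> nat \<Rightarrow> ('a, 'm) op)
           (\<theta>00 :: nat \<Rightarrow> 'a \<Rightarrow> 'a) (\<theta>10 :: nat \<Rightarrow> 'a \<Rightarrow> 'm)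
           (\<theta>01 :: nat \<Rightarrow> 'a \<Rightarrow> 'm \<Rightarrow> 'a) (\<theta>11 :: nat \<Rightarrow> 'a \<Rightarrow> 'm \<Rightarrow> 'm).
     (\<forall>x k. \<beta> x k \<in> EL ip) \<and>
     (\<forall>x y. \<beta> (x * y) = ps_mult (\<beta> x) (\<beta> y)) \<and>
     (\<forall>x. \<beta> (star x) = ps_star ip (\<beta> x)) \<and>
     (\<forall>n. clinear (\<theta>00 n) \<and> clinear (\<theta>10 n) \<and> clinear_fun (\<theta>01 n) \<and> clinear_fun (\<theta>11 n)) \<and>
     (\<forall>x n. e00 (\<beta> x (2 * n)) = \<theta>00 n x \<and> e00 (\<beta> x (2 * n + 1)) = 0) \<and>
     (\<forall>x n. e10 (\<beta> x (2 * n + 1)) = \<theta>10 (n + 1) x \<and> e10 (\<beta> x (2 * n)) = 0) \<and>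
     (\<forall>x n. e01 (\<beta> x (2 * n + 1)) = \<theta>01 (n + 1) x \<and> e01 (\<beta> x (2 * n)) = (\<lambda>_. 0)) \<and>
     (\<forall>x n. e11 (\<beta> x (2 * n)) = \<theta>11 (n + 1) x \<and> e11 (\<beta> x (2 * n + 1)) = (\<lambda>_. 0)) \<and>
     (\<forall>x. \<theta>00 0 x = x) \<and> \<theta>00 1 = L \<and> \<theta>10 1 = \<delta> \<and>
     (\<forall>x. \<theta>01 1 x = (\<lambda>\<eta>. ip (\<delta> (star x)) \<eta>)) \<and> \<theta>11 1 = \<pi>"
proof -
  have faithful: "\<forall>a::'a. star a * a = 0 \<longrightarrow> a = 0"
    using subalg_of_Bh_star_faithful[OF A] by blast
  have L_star: "\<forall>x. L (star x) = star (L x)"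
    using L_ccp unfolding ccp_def by blast
  have pi_adjoint: "\<forall>x \<xi> \<eta>. ip (\<pi> x \<xi>) \<eta> = ip \<xi> (\<pi> (star x) \<eta>)"
    using canon unfolding canonical_triple_def is_adjoint_of_def by blast
  have "canonical_data L ract ip \<pi> \<delta>"
    using faithful L_star pi_adjoint L_lin canon H2
    unfolding canonical_data_def clinear_def canonical_triple_def pre_hilbert_module_def
    by (elim conjE) (intro conjI; (assumption | metis))
  then interpret canonical_data L ract ip \<pi> \<delta> .
  show ?thesis by (rule star_hom_series_exists)
qed

end
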